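(* Let $K\ge1$ be fixed, $\boldsymbol{\beta}_0\in\mathbb{R}^K$ with $k_0$ nonzero coordinates, and for each $n>K$ let the $n\times K$ design matrix $\mathbf{X}$ with rows $\mathbf{x}_i$ satisfy $\mathbf{X}^t\mathbf{X}=n\mathbf{I}$, $\sum_{i=1}^n x_{i,k}=0$ for each $k$, and $\max_{1\le i\le n}\|\mathbf{x}_i\|/\sqrt n\to0$. Suppose $Y_i=\mathbf{x}_i^t\boldsymbol{\beta}_0+\varepsilon_i$ with $\varepsilon_i$ independent, $\mathbb{E}(\varepsilon_i)=0$, $\mathbb{E}(\varepsilon_i^2)=\sigma_0^2>0$, $\mathbb{E}(\varepsilon_i^4)\le M<\infty$. Consider the rescaled spike and slab model with $\lambda_n=n$, and priors with $\pi\{\gamma_k\ge\eta_0\}=1$ for some $\eta_0>0$ and every $k$, and $\mu\{\sigma^2\le s_0^2\}=1$ for some $0<s_0^2<\infty$. Let $C_n\to\infty$ be a positive increasing sequence with $C_n/\sqrt n\to0$, $\widehat{\mathcal{M}}_n=(\widehat{\mathcal{M}}_{1,n},\dots,\widehat{\mathcal{M}}_{K,n})^t=\mathcal{M}_n(C_n)$, and $\hat k_n=\sum_{k=1}^K\mathbb{I}\{\widehat{\mathcal{M}}_{k,n}\ne0\}$. Then $\hat k_n\to k_0$ in probability.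
   Context: $\mathbf{Y}=(Y_1,\dots,Y_n)^t$, OLS $\widehat{\boldsymbol{\beta}}_n^\circ=(\mathbf{X}^t\mathbf{X})^{-1}\mathbf{X}^t\mathbf{Y}$, $\widehat\sigma_n^2=\|\mathbf{Y}-\mathbf{X}\widehat{\boldsymbol{\beta}}_n^\circ\|^2/(n-K)$. Rescaled spike and slab model: $Y_i^*=\widehat\sigma_n^{-1}n^{1/2}Y_i$, and as data $\mathbf{Y}^*$ is modeled by $(Y_i^*\mid\boldsymbol{\beta},\sigma^2)$ independent $N(\mathbf{x}_i^t\boldsymbol{\beta},\sigma^2\lambda_n)$, $(\boldsymbol{\beta}\mid\boldsymbol{\gamma})\sim N(\mathbf{0},\mathrm{diag}(\gamma_1,\dots,\gamma_K))$, $\boldsymbol{\gamma}\sim\pi$, $\sigma^2\sim\mu$, with $\pi\{\gamma_k>0\}=1$, $\mu\{\sigma^2>0\}=1$. $\widehat{\boldsymbol{\beta}}_n^*=(\widehat\beta_{1,n}^*,\dots,\widehat\beta_{K,n}^* )^t$ is the posterior mean of $\boldsymbol{\beta}$ given $\mathbf{Y}^*$, and for $C>0$, $\mathcal{M}_n(C)=(\mathbb{I}\{|\widehat\beta_{1,n}^*|\ge C\},\dots,\mathbb{I}\{|\widehat\beta_{K,n}^*|\ge C\})^t$. *)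

theory Defs
  imports "HOL-Probability.Probability"
begin

text \<open>Design rows: X i :: real^'K is the i-th row (i < n) of the n x K design matrix.\<close>

definition design_gram :: "nat \<Rightarrow> (nat \<Rightarrow> real^'K) \<Rightarrow> real^'K^'K" where
  "design_gram n X = (\<chi> j k. \<Sum>i<n. X i $ j * X i $ k)"

definition ols :: "nat \<Rightarrow> (nat \<Rightarrow> real^'K) \<Rightarrow> (nat \<Rightarrow> real) \<Rightarrow> real^'K" where
  "ols n X Y = matrix_inv (design_gram n X) *v (\<Sum>i<n. Y i *\<^sub>R X i)"

definition sigma_hat_sq :: "nat \<Rightarrow> (nat \<Rightarrow> real^'K) \<Rightarrow> (nat \<Rightarrow> real) \<Rightarrow> real" where
  "sigma_hat_sq n X Y =
     (\<Sum>i<n. (Y i - X i \<bullet> ols n X Y)\<^sup>2) / (real n - real CARD('K))"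

definition rescaled_resp :: "nat \<Rightarrow> (nat \<Rightarrow> real^'K) \<Rightarrow> (nat \<Rightarrow> real) \<Rightarrow> nat \<Rightarrow> real" where
  "rescaled_resp n X Y i = sqrt (real n) / sqrt (sigma_hat_sq n X Y) * Y i"

definition ss_lik :: "nat \<Rightarrow> (nat \<Rightarrow> real^'K) \<Rightarrow> real \<Rightarrow> (nat \<Rightarrow> real) \<Rightarrow> real^'K \<Rightarrow> real \<Rightarrow> real" where
  "ss_lik n X lam ystar b s = (\<Prod>i<n. normal_density (X i \<bullet> b) (sqrt (s * lam)) (ystar i))"

definition slab_dens :: "real^'K \<Rightarrow> real^'K \<Rightarrow> real" where
  "slab_dens g b = (\<Prod>k\<in>UNIV. normal_density 0 (sqrt (g $ k)) (b $ k))"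

text \<open>Posterior mean of beta given Y*, with gamma ~ pi and sigma^2 ~ mu independent.\<close>
definition ss_post_mean :: "nat \<Rightarrow> (nat \<Rightarrow> real^'K) \<Rightarrow> real \<Rightarrow> (real^'K) measure \<Rightarrow> real measure
      \<Rightarrow> (nat \<Rightarrow> real) \<Rightarrow> real^'K" where
  "ss_post_mean n X lam pr mu ystar =
     (\<chi> k. (\<integral>g. (\<integral>s. (\<integral>b. b $ k * ss_lik n X lam ystar b s * slab_dens g b \<partial>lborel) \<partial>mu) \<partial>pr)
          / (\<integral>g. (\<integral>s. (\<integral>b. ss_lik n X lam ystar b s * slab_dens g b \<partial>lborel) \<partial>mu) \<partial>pr))"

definition sel_vector :: "nat \<Rightarrow> (nat \<Rightarrow> real^'K) \<Rightarrow> real \<Rightarrow> (real^'K) measure \<Rightarrow> real measure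
      \<Rightarrow> (nat \<Rightarrow> real) \<Rightarrow> real \<Rightarrow> real^'K" where
  "sel_vector n X lam pr mu Y C =
     (\<chi> k. if \<bar>ss_post_mean n X lam pr mu (rescaled_resp n X Y) $ k\<bar> \<ge> C then 1 else 0)"

definition conv_in_prob :: "'a measure \<Rightarrow> (nat \<Rightarrow> 'a \<Rightarrow> real) \<Rightarrow> real \<Rightarrow> bool" where
  "conv_in_prob P Z c \<longleftrightarrow>
     (\<forall>e>0. ((\<lambda>n. measure P {\<omega> \<in> space P. \<bar>Z n \<omega> - c\<bar> > e}) \<longlongrightarrow> 0) sequentially)"

end

(*
  With X^t X = n I the likelihood factorises over the coordinates, so given (gamma, sigma^2) the
  posterior of beta_k in the rescaled model is normal, with mean the ridge shrinkage
  gamma_k / (gamma_k + sigma^2) of the rescaled OLS coordinate sqrt n * betahat_k / sigmahat.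
  Averaging over the priors, the posterior mean is this OLS coordinate times a factor in
  [eta0 / (eta0 + s0^2), 1].  By Chebyshev's inequality, with probability tending to one every
  betahat_k - beta0_k is at most T / sqrt n and sigmahat^2 lies in [sigma0^2 / 2, 3 sigma0^2 / 2].
  On that event the posterior means of the zero coordinates are bounded by a constant, hence
  eventually below C_n, while those of the nonzero coordinates grow like sqrt n, hence
  eventually above C_n = o(sqrt n).
*)
theory Submission
  imports Defs
begin

section \<open>Gaussian integrals\<close>

lemma integral_lborel_prod:
  fixes f :: "'a::euclidean_space \<Rightarrow> real \<Rightarrow> real"
  assumes int: "\<And>b. b \<in> Basis \<Longrightarrow> integrable lborel (f b)"
  shows "integrable lborel (\<lambda>x::'a. \<Prod>b\<in>Basis. f b (x \<bullet> b))"
    and "(\<integral>x. (\<Prod>b\<in>Basis. f b (x \<bullet> b)) \<partial>(lborel::'a measure)) = (\<Prod>b\<in>Basis. integral\<^sup>L lborel (f b))"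
proof -
  interpret finite_product_sigma_finite "\<lambda>_. lborel::real measure" "Basis::'a set"
    by standard simp
  have [measurable]: "\<And>b. b \<in> Basis \<Longrightarrow> f b \<in> borel_measurable borel"
    using int by auto
  have coords: "(\<lambda>f. \<Sum>b\<in>Basis. f b *\<^sub>R b) \<in> measurable (\<Pi>\<^sub>M b\<in>Basis. lborel) (borel::'a measure)"
    by measurable
  have F: "(\<lambda>x::'a. \<Prod>b\<in>Basis. f b (x \<bullet> b)) \<in> borel_measurable borel"
    by measurable
  have comp: "(\<Prod>b\<in>Basis. f b ((\<Sum>c\<in>Basis. g c *\<^sub>R c) \<bullet> b)) = (\<Prod>b\<in>Basis. f b (g b))" for g
    by (intro prod.cong refl) (simp add: inner_sum_left inner_Basis if_distrib sum.delta cong: if_cong)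
  have "integrable (\<Pi>\<^sub>M b\<in>Basis. lborel) (\<lambda>g. \<Prod>b\<in>Basis. f b (g b))"
    by (intro product_integrable_prod int) simp
  then show "integrable lborel (\<lambda>x::'a. \<Prod>b\<in>Basis. f b (x \<bullet> b))"
    by (subst lborel_eq) (simp add: integrable_distr_eq[OF coords F] comp)
  show "(\<integral>x. (\<Prod>b\<in>Basis. f b (x \<bullet> b)) \<partial>(lborel::'a measure)) = (\<Prod>b\<in>Basis. integral\<^sup>L lborel (f b))"
    by (subst lborel_eq) (simp add: integral_distr[OF coords F] comp product_integral_prod int)
qed

lemma integral_lborel_prod_vec:
  fixes f :: "'n::finite \<Rightarrow> real \<Rightarrow> real"
  assumes int: "\<And>k. integrable lborel (f k)"
  shows "integrable lborel (\<lambda>x::real^'n. \<Prod>k\<in>UNIV. f k (x $ k))"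
    and "(\<integral>x. (\<Prod>k\<in>UNIV. f k (x $ k)) \<partial>(lborel::(real^'n) measure)) = (\<Prod>k\<in>UNIV. integral\<^sup>L lborel (f k))"
proof -
  define F where "F b = f (SOME k. b = axis k (1::real))" for b :: "real^'n"
  have Basis: "(Basis :: (real^'n) set) = (\<lambda>k. axis k 1) ` UNIV"
    by (auto simp: Basis_vec_def)
  have inj: "inj (\<lambda>k::'n. axis k (1::real))"
    by (auto simp: inj_def axis_eq_axis)
  have F_axis: "F (axis k 1) = f k" for k
    unfolding F_def by (rule arg_cong[where f=f]) (auto simp: axis_eq_axis)
  have prod_F: "(\<Prod>b\<in>Basis. F b (x \<bullet> b)) = (\<Prod>k\<in>UNIV. f k (x $ k))" for x :: "real^'n"
    unfolding Basis by (subst prod.reindex[OF inj]) (simp add: F_axis inner_axis)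
  have int_F: "\<And>b. b \<in> (Basis :: (real^'n) set) \<Longrightarrow> integrable lborel (F b)"
    unfolding Basis using int F_axis by auto
  show "integrable lborel (\<lambda>x::real^'n. \<Prod>k\<in>UNIV. f k (x $ k))"
    using integral_lborel_prod(1)[of F, OF int_F] by (simp add: prod_F)
  show "(\<integral>x. (\<Prod>k\<in>UNIV. f k (x $ k)) \<partial>(lborel::(real^'n) measure)) = (\<Prod>k\<in>UNIV. integral\<^sup>L lborel (f k))"
    using integral_lborel_prod(2)[of F, OF int_F] unfolding Basis
    by (simp add: prod_F prod.reindex[OF inj] F_axis inner_axis)
qed

lemma integral_lborel_coord_prod_vec:
  fixes f :: "'n::finite \<Rightarrow> real \<Rightarrow> real"
  assumes int: "\<And>j. integrable lborel (f j)" and int_k: "integrable lborel (\<lambda>t. t * f k t)"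
  shows "(\<integral>x. x $ k * (\<Prod>j\<in>UNIV. f j (x $ j)) \<partial>(lborel::(real^'n) measure))
           = (\<integral>t. t * f k t \<partial>lborel) * (\<Prod>j\<in>UNIV - {k}. integral\<^sup>L lborel (f j))"
proof -
  define f' where "f' j = (if j = k then (\<lambda>t. t * f j t) else f j)" for j
  have int': "integrable lborel (f' j)" for j
    unfolding f'_def using int int_k by auto
  have "(\<Prod>j\<in>UNIV. f' j (x $ j)) = x $ k * (\<Prod>j\<in>UNIV. f j (x $ j))" for x :: "real^'n"
  proof -
    have "(\<Prod>j\<in>UNIV. f' j (x $ j)) = x $ k * f k (x $ k) * (\<Prod>j\<in>UNIV - {k}. f j (x $ j))"
      unfolding f'_def by (subst prod.remove[of UNIV k]) (auto intro!: prod.cong)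
    then show ?thesis by (simp add: prod.remove[of UNIV k])
  qed
  moreover have "(\<Prod>j\<in>UNIV. integral\<^sup>L lborel (f' j))
      = (\<integral>t. t * f k t \<partial>lborel) * (\<Prod>j\<in>UNIV - {k}. integral\<^sup>L lborel (f j))"
    unfolding f'_def by (subst prod.remove[of UNIV k]) (auto intro!: prod.cong)
  ultimately show ?thesis
    using integral_lborel_prod_vec(2)[of f', OF int'] by simp
qed

text \<open>For \<open>X\<^sup>t X = n I\<close> the likelihood with variance \<open>v = \<sigma>\<^sup>2 \<lambda>\<close> is, up to a factor free of \<open>b\<close>,
  the product of the terms \<open>exp ((2 b\<^sub>k z\<^sub>k - n b\<^sub>k\<^sup>2) / (2 v))\<close> with \<open>z = X\<^sup>t y\<close>. Times the slab
  density of \<open>N(0, G)\<close> such a term is \<open>tilted_normal_mass\<close> times the density of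
  \<open>N(shrunk_mean, shrunk_var)\<close> (\<open>tilted_normal_eq\<close>).\<close>
definition tilted_normal :: "real \<Rightarrow> real \<Rightarrow> real \<Rightarrow> real \<Rightarrow> real \<Rightarrow> real" where
  "tilted_normal nn v G z t = exp ((2 * t * z - nn * t\<^sup>2) / (2 * v)) * normal_density 0 (sqrt G) t"

definition shrunk_var :: "real \<Rightarrow> real \<Rightarrow> real \<Rightarrow> real" where
  "shrunk_var nn v G = v * G / (nn * G + v)"

definition shrunk_mean :: "real \<Rightarrow> real \<Rightarrow> real \<Rightarrow> real \<Rightarrow> real" where
  "shrunk_mean nn v G z = z * G / (nn * G + v)"

definition tilted_normal_mass :: "real \<Rightarrow> real \<Rightarrow> real \<Rightarrow> real \<Rightarrow> real" where
  "tilted_normal_mass nn v G z =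
     exp ((shrunk_mean nn v G z)\<^sup>2 / (2 * shrunk_var nn v G)) * sqrt (shrunk_var nn v G / G)"

lemma tilted_normal_eq:
  assumes v: "v > 0" and G: "G > 0" and nn: "nn > 0"
  shows "tilted_normal nn v G z t =
    tilted_normal_mass nn v G z * normal_density (shrunk_mean nn v G z) (sqrt (shrunk_var nn v G)) t"
proof -
  define V where "V = shrunk_var nn v G"
  define m where "m = shrunk_mean nn v G z"
  define a where "a = nn / v + 1 / G"
  have a: "a > 0" unfolding a_def using v G nn by (simp add: add_pos_pos)
  have "nn * G + v > 0" using v G nn by (simp add: add_pos_pos)
  then have V: "V = 1 / a" and m: "m = z / v * V"
    unfolding V_def m_def a_def shrunk_var_def shrunk_mean_def using v G by (simp_all add: field_simps)
  have V_pos: "V > 0" using a V by simp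
  \<comment> \<open>completing the square in \<open>t\<close>\<close>
  have exponent: "(2 * t * z - nn * t\<^sup>2) / (2 * v) + -(t - 0)\<^sup>2 / (2 * G)
      = m\<^sup>2 / (2 * V) + -(t - m)\<^sup>2 / (2 * V)"
  proof -
    have "(2 * t * z - nn * t\<^sup>2) / (2 * v) + -(t - 0)\<^sup>2 / (2 * G) = t * z / v - t\<^sup>2 * a / 2"
      unfolding a_def using v G by (simp add: field_simps power2_eq_square)
    moreover have "m\<^sup>2 / (2 * V) + -(t - m)\<^sup>2 / (2 * V) = t * m * a - t\<^sup>2 * a / 2"
      unfolding V using a by (simp add: field_simps power2_eq_square)
    ultimately show ?thesis unfolding m V using a v by simp
  qed
  have const: "1 / sqrt (2 * pi * G) = sqrt (V / G) * (1 / sqrt (2 * pi * V))"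
    using V_pos G by (simp add: real_sqrt_divide real_sqrt_mult field_simps)
  have "tilted_normal nn v G z t
      = 1 / sqrt (2 * pi * G) * exp ((2 * t * z - nn * t\<^sup>2) / (2 * v) + -(t - 0)\<^sup>2 / (2 * G))"
    unfolding tilted_normal_def normal_density_def using G by (simp add: mult_exp_exp)
  also have "\<dots> = sqrt (V / G) * (1 / sqrt (2 * pi * V)) * exp (m\<^sup>2 / (2 * V) + -(t - m)\<^sup>2 / (2 * V))"
    by (simp only: const exponent)
  also have "\<dots> = tilted_normal_mass nn v G z * normal_density m (sqrt V) t"
    unfolding tilted_normal_mass_def normal_density_def V_def[symmetric] m_def[symmetric]
    using V_pos by (simp add: mult_exp_exp)
  finally show ?thesis unfolding m_def V_def .
qed

lemma tilted_normal_integrals: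
  assumes v: "v > 0" and G: "G \<ge> 0" and nn: "nn > 0"
  shows "integrable lborel (tilted_normal nn v G z)"
    and "(\<integral>t. tilted_normal nn v G z t \<partial>lborel) = tilted_normal_mass nn v G z"
    and "integrable lborel (\<lambda>t. t * tilted_normal nn v G z t)"
    and "(\<integral>t. t * tilted_normal nn v G z t \<partial>lborel) = shrunk_mean nn v G z * tilted_normal_mass nn v G z"
proof -
  have "integrable lborel (tilted_normal nn v G z) \<and>
    (\<integral>t. tilted_normal nn v G z t \<partial>lborel) = tilted_normal_mass nn v G z \<and>
    integrable lborel (\<lambda>t. t * tilted_normal nn v G z t) \<and>
    (\<integral>t. t * tilted_normal nn v G z t \<partial>lborel) = shrunk_mean nn v G z * tilted_normal_mass nn v G z"
  proof (cases "G = 0")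
    case True
    then have "tilted_normal nn v G z = (\<lambda>t. 0)"
      by (auto simp: tilted_normal_def normal_density_def)
    then show ?thesis using True by (simp add: tilted_normal_mass_def shrunk_var_def)
  next
    case False
    then have "G > 0" using G by simp
    then have sd: "sqrt (shrunk_var nn v G) > 0"
      unfolding shrunk_var_def using v nn by (simp add: add_pos_pos)
    show ?thesis
      unfolding tilted_normal_eq[OF v \<open>G > 0\<close> nn] mult.left_commute[of _ "tilted_normal_mass nn v G z"]
      using integrable_normal_density[OF sd] integral_normal_density[OF sd]
        integrable_normal_moment_nz_1[OF sd] integral_normal_moment_nz_1[OF sd]
      by (simp add: mult.commute)
  qed
  then show "integrable lborel (tilted_normal nn v G z)"
    and "(\<integral>t. tilted_normal nn v G z t \<partial>lborel) = tilted_normal_mass nn v G z"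
    and "integrable lborel (\<lambda>t. t * tilted_normal nn v G z t)"
    and "(\<integral>t. t * tilted_normal nn v G z t \<partial>lborel) = shrunk_mean nn v G z * tilted_normal_mass nn v G z"
    by auto
qed

section \<open>Orthonormal designs\<close>

definition design_tmult :: "nat \<Rightarrow> (nat \<Rightarrow> real^'K) \<Rightarrow> (nat \<Rightarrow> real) \<Rightarrow> real^'K" where
  "design_tmult n X y = (\<Sum>i<n. y i *\<^sub>R X i)"

text \<open>The OLS residual sum of squares, in the closed form valid when \<open>X\<^sup>t X = n I\<close>.\<close>
definition resid_ss :: "nat \<Rightarrow> (nat \<Rightarrow> real^'K) \<Rightarrow> (nat \<Rightarrow> real) \<Rightarrow> real" where
  "resid_ss n X y = (\<Sum>i<n. (y i)\<^sup>2) - design_tmult n X y \<bullet> design_tmult n X y / real n"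

lemma design_gram_entry:
  assumes "design_gram n X = mat a"
  shows "(\<Sum>i<n. X i $ j * X i $ k) = (if j = k then a else 0)"
  using arg_cong[OF assms, of "\<lambda>A. A $ j $ k"] by (simp add: design_gram_def mat_def)

lemma design_gram_eq_mat_iff:
  "design_gram n X = mat a \<longleftrightarrow> (\<forall>j k. (\<Sum>i<n. X i $ j * X i $ k) = (if j = k then a else 0))"
  by (auto simp: design_gram_def mat_def vec_eq_iff)

lemma design_tmult_design:
  assumes gram: "design_gram n X = mat (real n)"
  shows "design_tmult n X (\<lambda>i. X i \<bullet> b) = real n *\<^sub>R b"
proof -
  have "design_tmult n X (\<lambda>i. X i \<bullet> b) $ k = (\<Sum>j\<in>UNIV. b $ j * (\<Sum>i<n. X i $ j * X i $ k))" for k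
    by (simp add: design_tmult_def inner_vec_def sum_distrib_left sum_distrib_right
        sum.swap[of _ "{..<n}"] mult_ac)
  then show ?thesis
    by (simp add: vec_eq_iff design_gram_entry[OF gram] if_distrib sum.delta cong: if_cong)
qed

lemma design_tmult_nth: "design_tmult n X y $ k = (\<Sum>i<n. y i * X i $ k)"
  by (simp add: design_tmult_def)

lemma design_tmult_add:
  "design_tmult n X (\<lambda>i. y i + y' i) = design_tmult n X y + design_tmult n X y'"
  by (simp add: design_tmult_def scaleR_add_left sum.distrib)

lemma design_tmult_scale: "design_tmult n X (\<lambda>i. c * y i) = c *\<^sub>R design_tmult n X y"
  by (simp add: design_tmult_def scaleR_sum_right)

lemma sum_sq_resid_orthonormal:
  assumes gram: "design_gram n X = mat (real n)"
  shows "(\<Sum>i<n. (y i - X i \<bullet> b)\<^sup>2)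
      = (\<Sum>i<n. (y i)\<^sup>2) - 2 * (b \<bullet> design_tmult n X y) + real n * (b \<bullet> b)"
proof -
  have "(\<Sum>i<n. (X i \<bullet> b)\<^sup>2) = b \<bullet> design_tmult n X (\<lambda>i. X i \<bullet> b)"
    by (simp add: design_tmult_def inner_sum_right power2_eq_square inner_commute)
  also have "\<dots> = real n * (b \<bullet> b)"
    by (simp add: design_tmult_design[OF gram])
  finally have "(\<Sum>i<n. (X i \<bullet> b)\<^sup>2) = real n * (b \<bullet> b)" .
  moreover have "(\<Sum>i<n. y i * (X i \<bullet> b)) = b \<bullet> design_tmult n X y"
    by (simp add: design_tmult_def inner_sum_right inner_commute)
  moreover have "(\<Sum>i<n. (y i - X i \<bullet> b)\<^sup>2)
      = (\<Sum>i<n. (y i)\<^sup>2) - 2 * (\<Sum>i<n. y i * (X i \<bullet> b)) + (\<Sum>i<n. (X i \<bullet> b)\<^sup>2)"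
    by (simp add: power2_diff sum.distrib sum_subtractf sum_distrib_left mult_ac)
  ultimately show ?thesis by simp
qed

lemma mat_eq_scaleR_mat_1: "(mat a :: real^'n^'n) = a *\<^sub>R mat 1"
  by (simp add: mat_def vec_eq_iff)

lemma matrix_vector_mult_mat: "(mat a :: real^'n^'n) *v x = a *\<^sub>R x"
  by (metis mat_eq_scaleR_mat_1 matrix_scaleR_vector_ac matrix_vector_mul_lid)

lemma matrix_inv_mat:
  fixes a :: real
  assumes "a \<noteq> 0"
  shows "matrix_inv (mat a :: real^'n^'n) = mat (1 / a)"
proof -
  have inv: "mat a ** mat (1 / a) = mat 1 \<and> mat (1 / a) ** mat a = (mat 1 :: real^'n^'n)"
    using assms by (simp add: mat_eq_scaleR_mat_1[of a] mat_eq_scaleR_mat_1[of "1/a"] matrix_scalar_ac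
        flip: scalar_matrix_assoc)
  have unique: "A = mat (1 / a)" if "mat a ** A = mat 1 \<and> A ** mat a = mat 1" for A :: "real^'n^'n"
  proof -
    have "A = A ** (mat a ** mat (1 / a))"
      by (simp only: inv[THEN conjunct1] matrix_mul_rid)
    also have "\<dots> = (A ** mat a) ** mat (1 / a)"
      by (rule matrix_mul_assoc)
    finally show ?thesis using that by simp
  qed
  show ?thesis
    unfolding matrix_inv_def by (rule unique, rule someI[of _ "mat (1 / a)"], rule inv)
qed

lemma ols_orthonormal:
  assumes "n > 0" and "design_gram n X = mat (real n)"
  shows "ols n X y = (1 / real n) *\<^sub>R design_tmult n X y"
  using assms by (simp add: ols_def matrix_inv_mat matrix_vector_mult_mat design_tmult_def)

lemma resid_ss_eq_sum_sq_resid: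
  assumes n: "n > 0" and gram: "design_gram n X = mat (real n)"
  shows "resid_ss n X y = (\<Sum>i<n. (y i - X i \<bullet> ols n X y)\<^sup>2)"
  unfolding sum_sq_resid_orthonormal[OF gram] ols_orthonormal[OF n gram] resid_ss_def
  using n by (simp add: inner_commute power2_eq_square field_simps)

lemma sigma_hat_sq_orthonormal:
  fixes X :: "nat \<Rightarrow> real^'K"
  assumes "n > 0" and "design_gram n X = mat (real n)"
  shows "sigma_hat_sq n X y = resid_ss n X y / (real n - real CARD('K))"
  unfolding sigma_hat_sq_def resid_ss_eq_sum_sq_resid[OF assms] ..

lemma resid_ss_signal_plus_noise:
  assumes n: "n > 0" and gram: "design_gram n X = mat (real n)"
  shows "resid_ss n X (\<lambda>i. X i \<bullet> \<beta> + e i) = resid_ss n X e"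
proof -
  have "ols n X (\<lambda>i. X i \<bullet> \<beta> + e i) = \<beta> + ols n X e"
    using n by (simp add: ols_orthonormal[OF n gram] design_tmult_add design_tmult_design[OF gram]
        scaleR_add_right)
  then show ?thesis
    by (simp add: resid_ss_eq_sum_sq_resid[OF n gram] inner_add_right)
qed

lemma resid_ss_scale: "resid_ss n X (\<lambda>i. c * y i) = c\<^sup>2 * resid_ss n X y"
  by (simp add: resid_ss_def design_tmult_scale power_mult_distrib sum_distrib_left
      right_diff_distrib power2_eq_square mult_ac)

section \<open>The posterior mean\<close>

definition lik_scale :: "nat \<Rightarrow> real \<Rightarrow> real \<Rightarrow> real" where
  "lik_scale n v S = (1 / sqrt (2 * pi * v)) ^ n * exp (- S / (2 * v))"

text \<open>The marginal likelihood of \<open>y\<close> given \<open>(\<gamma>, \<sigma>\<^sup>2) = (g, s)\<close> when \<open>\<lambda> = n\<close>; the absolute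
  values only matter off the support of the priors.\<close>
definition marginal_lik :: "nat \<Rightarrow> (nat \<Rightarrow> real^'K) \<Rightarrow> (nat \<Rightarrow> real) \<Rightarrow> real^'K \<Rightarrow> real \<Rightarrow> real" where
  "marginal_lik n X y g s = lik_scale n (\<bar>s\<bar> * real n) (\<Sum>i<n. (y i)\<^sup>2) *
     (\<Prod>k\<in>UNIV. tilted_normal_mass (real n) (\<bar>s\<bar> * real n) \<bar>g $ k\<bar> (design_tmult n X y $ k))"

lemma normal_density_sqrt_abs: "normal_density m (sqrt s) x = normal_density m (sqrt \<bar>s\<bar>) x"
  by (simp add: normal_density_def power2_eq_square real_sqrt_mult[symmetric] real_sqrt_abs2)

lemma lik_slab_factor:
  fixes X :: "nat \<Rightarrow> real^'K"
  assumes n: "n > 0" and gram: "design_gram n X = mat (real n)"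
  shows "ss_lik n X (real n) y b s * slab_dens g b
     = lik_scale n (\<bar>s\<bar> * real n) (\<Sum>i<n. (y i)\<^sup>2) *
       (\<Prod>k\<in>UNIV. tilted_normal (real n) (\<bar>s\<bar> * real n) \<bar>g $ k\<bar> (design_tmult n X y $ k) (b $ k))"
proof (cases "s = 0")
  case True
  then show ?thesis
    using n by (simp add: ss_lik_def lik_scale_def normal_density_def)
next
  case False
  define v where "v = \<bar>s\<bar> * real n"
  have v: "v > 0" unfolding v_def using False n by simp
  define z where "z = design_tmult n X y"
  have "ss_lik n X (real n) y b s = (\<Prod>i<n. 1 / sqrt (2 * pi * v) * exp (- (y i - X i \<bullet> b)\<^sup>2 / (2 * v)))"
    unfolding ss_lik_def normal_density_sqrt_abs[of _ "s * real n"]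
    by (simp add: normal_density_def v_def abs_mult)
  also have "\<dots> = (\<Prod>i<n. 1 / sqrt (2 * pi * v)) * (\<Prod>i<n. exp (- (y i - X i \<bullet> b)\<^sup>2 / (2 * v)))"
    by (rule prod.distrib)
  also have "\<dots> = (1 / sqrt (2 * pi * v)) ^ n * exp (- (\<Sum>i<n. (y i - X i \<bullet> b)\<^sup>2) / (2 * v))"
    by (simp add: exp_sum[symmetric] sum_negf sum_divide_distrib[symmetric])
  also have "\<dots> = lik_scale n v (\<Sum>i<n. (y i)\<^sup>2) * exp ((2 * (b \<bullet> z) - real n * (b \<bullet> b)) / (2 * v))"
    unfolding sum_sq_resid_orthonormal[OF gram] z_def lik_scale_def
    by (simp add: mult_exp_exp add_divide_distrib[symmetric] diff_divide_distrib)
  also have "exp ((2 * (b \<bullet> z) - real n * (b \<bullet> b)) / (2 * v))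
      = (\<Prod>k\<in>UNIV. exp ((2 * b $ k * z $ k - real n * (b $ k)\<^sup>2) / (2 * v)))"
    by (simp add: exp_sum[symmetric] inner_vec_def sum_distrib_left sum_subtractf
        sum_divide_distrib[symmetric] power2_eq_square mult_ac)
  finally show ?thesis
    unfolding slab_dens_def normal_density_sqrt_abs[of 0 "g $ _"] v_def[symmetric] z_def[symmetric]
    by (simp add: tilted_normal_def prod.distrib mult_ac)
qed

lemma ss_lik_zero_variance: "n > 0 \<Longrightarrow> ss_lik n X lam y b 0 = 0"
  by (simp add: ss_lik_def normal_density_def power_0_left)

lemma marginal_lik_zero_variance: "n > 0 \<Longrightarrow> marginal_lik n X y g 0 = 0"
  by (simp add: marginal_lik_def lik_scale_def power_0_left)

lemma integral_lik_slab:
  fixes X :: "nat \<Rightarrow> real^'K"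
  assumes n: "n > 0" and gram: "design_gram n X = mat (real n)"
  shows "(\<integral>b. ss_lik n X (real n) y b s * slab_dens g b \<partial>lborel) = marginal_lik n X y g s"
proof (cases "s = 0")
  case True
  then show ?thesis using n by (simp add: ss_lik_zero_variance marginal_lik_zero_variance)
next
  case False
  define v where "v = \<bar>s\<bar> * real n"
  define f where "f j = tilted_normal (real n) v \<bar>g $ j\<bar> (design_tmult n X y $ j)" for j
  have v: "v > 0" and nn: "real n > 0" unfolding v_def using False n by simp_all
  note integrals = tilted_normal_integrals[OF v abs_ge_zero nn]
  have int_f: "integrable lborel (f j)" for j
    unfolding f_def by (rule integrals(1))
  have "(\<integral>b. ss_lik n X (real n) y b s * slab_dens g b \<partial>lborel)
      = lik_scale n v (\<Sum>i<n. (y i)\<^sup>2) * (\<integral>b. (\<Prod>j\<in>UNIV. f j (b $ j)) \<partial>lborel)"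
    by (simp add: lik_slab_factor[OF n gram] f_def v_def)
  also have "\<dots> = marginal_lik n X y g s"
    unfolding integral_lborel_prod_vec(2)[of f, OF int_f]
    by (simp add: f_def marginal_lik_def v_def[symmetric] integrals(2))
  finally show ?thesis .
qed

lemma integral_coord_lik_slab:
  fixes X :: "nat \<Rightarrow> real^'K"
  assumes n: "n > 0" and gram: "design_gram n X = mat (real n)"
  shows "(\<integral>b. b $ k * ss_lik n X (real n) y b s * slab_dens g b \<partial>lborel)
    = shrunk_mean (real n) (\<bar>s\<bar> * real n) \<bar>g $ k\<bar> (design_tmult n X y $ k) * marginal_lik n X y g s"
proof (cases "s = 0")
  case True
  then show ?thesis using n by (simp add: ss_lik_zero_variance marginal_lik_zero_variance)
next
  case False
  define v where "v = \<bar>s\<bar> * real n"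
  define f where "f j = tilted_normal (real n) v \<bar>g $ j\<bar> (design_tmult n X y $ j)" for j
  have v: "v > 0" and nn: "real n > 0" unfolding v_def using False n by simp_all
  note integrals = tilted_normal_integrals[OF v abs_ge_zero nn]
  have int_f: "integrable lborel (f j)" for j
    unfolding f_def by (rule integrals(1))
  have int_tf: "integrable lborel (\<lambda>t. t * f k t)"
    unfolding f_def by (rule integrals(3))
  have "(\<integral>b. b $ k * ss_lik n X (real n) y b s * slab_dens g b \<partial>lborel)
      = (\<integral>b. lik_scale n v (\<Sum>i<n. (y i)\<^sup>2) * (b $ k * (\<Prod>j\<in>UNIV. f j (b $ j))) \<partial>lborel)"
    unfolding mult.assoc lik_slab_factor[OF n gram] f_def v_def by (simp only: mult.left_commute)
  also have "\<dots> = shrunk_mean (real n) v \<bar>g $ k\<bar> (design_tmult n X y $ k) * marginal_lik n X y g s"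
    unfolding integral_mult_right_zero integral_lborel_coord_prod_vec[of f, OF int_f int_tf]
    by (simp add: f_def marginal_lik_def v_def[symmetric] integrals(2,4) prod.remove[of UNIV k] mult_ac)
  finally show ?thesis unfolding v_def .
qed

lemma power_div_fact_le_exp:
  fixes x :: real
  assumes "0 \<le> x"
  shows "x ^ m / fact m \<le> exp x"
proof -
  have "(\<Sum>k\<in>{m}. x ^ k /\<^sub>R fact k) \<le> (\<Sum>k. x ^ k /\<^sub>R fact k)"
    by (rule sum_le_suminf[OF summable_exp_generic]) (use assms in auto)
  then show ?thesis by (simp add: exp_def divide_inverse mult.commute)
qed

lemma lik_scale_le:
  assumes R: "R > 0" and v: "v > 0"
  shows "lik_scale n v R \<le> 1 + fact n / (pi * R) ^ n"
proof -
  define r where "r = 1 / sqrt (2 * pi * v)"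
  define c where "c = pi * R"
  have r: "r > 0" and c: "c > 0" unfolding r_def c_def using v R by simp_all
  have "r\<^sup>2 = 1 / (2 * pi * v)" unfolding r_def using v by (simp add: power_divide)
  then have lik: "lik_scale n v R = r ^ n * exp (- (c * r\<^sup>2))"
    unfolding lik_scale_def r_def[symmetric] c_def using v by (simp add: field_simps)
  show ?thesis
  proof (cases "r \<le> 1")
    case True
    have "r ^ n * exp (- (c * r\<^sup>2)) \<le> 1 * 1"
      by (intro mult_mono power_le_one) (use True r c in auto)
    then show ?thesis unfolding lik using R by (simp add: add_increasing2)
  next
    case False
    have "r ^ n \<le> (r\<^sup>2) ^ n"
      using False by (intro power_mono) (auto simp: power2_eq_square)
    also have "\<dots> = (c * r\<^sup>2) ^ n / c ^ n" using c by (simp add: power_mult_distrib)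
    also have "\<dots> \<le> fact n * exp (c * r\<^sup>2) / c ^ n"
      using power_div_fact_le_exp[of "c * r\<^sup>2" n] c by (intro divide_right_mono) (simp_all add: field_simps)
    finally have "r ^ n * exp (- (c * r\<^sup>2)) \<le> fact n * exp (c * r\<^sup>2) / c ^ n * exp (- (c * r\<^sup>2))"
      by (rule mult_right_mono) simp
    also have "\<dots> = fact n / c ^ n" by (simp add: exp_minus field_simps)
    finally show ?thesis unfolding lik c_def by simp
  qed
qed

lemma tilted_normal_mass_nonneg: "0 \<le> nn \<Longrightarrow> 0 \<le> v \<Longrightarrow> 0 \<le> G \<Longrightarrow> 0 \<le> tilted_normal_mass nn v G z"
  unfolding tilted_normal_mass_def shrunk_var_def by simp

lemma tilted_normal_mass_pos: "0 < nn \<Longrightarrow> 0 < v \<Longrightarrow> 0 < G \<Longrightarrow> 0 < tilted_normal_mass nn v G z"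
  unfolding tilted_normal_mass_def shrunk_var_def by (simp add: add_pos_pos)

lemma tilted_normal_mass_le:
  assumes nn: "nn > 0" and v: "v > 0" and G: "G \<ge> 0"
  shows "tilted_normal_mass nn v G z \<le> exp (z\<^sup>2 / (2 * v * nn))"
proof (cases "G = 0")
  case True
  then show ?thesis by (simp add: tilted_normal_mass_def shrunk_var_def)
next
  case False
  define A where "A = G / (nn * G + v)"
  have d: "nn * G + v > 0" using nn v G by (intro add_nonneg_pos mult_nonneg_nonneg) auto
  have A: "A > 0" unfolding A_def using d G False by simp
  have "shrunk_mean nn v G z = z * A" "shrunk_var nn v G = v * A"
    unfolding A_def shrunk_mean_def shrunk_var_def by simp_all
  then have "(shrunk_mean nn v G z)\<^sup>2 / (2 * shrunk_var nn v G) = z\<^sup>2 * A / (2 * v)"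
    using A v by (simp add: power2_eq_square)
  also have "\<dots> \<le> z\<^sup>2 * (1 / nn) / (2 * v)"
  proof -
    have "A \<le> 1 / nn" unfolding A_def using nn v G d by (simp add: field_simps)
    then show ?thesis using v by (intro divide_right_mono mult_left_mono) auto
  qed
  finally have "exp ((shrunk_mean nn v G z)\<^sup>2 / (2 * shrunk_var nn v G)) \<le> exp (z\<^sup>2 / (2 * v * nn))"
    by (simp add: mult.commute)
  moreover have "shrunk_var nn v G / G = v / (nn * G + v)"
    unfolding shrunk_var_def using False by simp
  then have "0 \<le> shrunk_var nn v G / G" "shrunk_var nn v G / G \<le> 1"
    using d nn G v by simp_all
  ultimately have "exp ((shrunk_mean nn v G z)\<^sup>2 / (2 * shrunk_var nn v G)) * sqrt (shrunk_var nn v G / G)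
      \<le> exp (z\<^sup>2 / (2 * v * nn)) * 1"
    by (intro mult_mono) auto
  then show ?thesis
    unfolding tilted_normal_mass_def by simp
qed

lemma marginal_lik_nonneg: "0 \<le> marginal_lik n X y g s"
  unfolding marginal_lik_def lik_scale_def
  by (intro mult_nonneg_nonneg prod_nonneg tilted_normal_mass_nonneg ballI) auto

lemma marginal_lik_pos: "n > 0 \<Longrightarrow> s \<noteq> 0 \<Longrightarrow> (\<And>k. g $ k \<noteq> 0) \<Longrightarrow> 0 < marginal_lik n X y g s"
  unfolding marginal_lik_def lik_scale_def
  by (intro mult_pos_pos prod_pos tilted_normal_mass_pos) auto

lemma marginal_lik_le:
  assumes n: "n > 0" and R: "resid_ss n X y > 0"
  shows "marginal_lik n X y g s \<le> 1 + fact n / (pi * resid_ss n X y) ^ n"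
proof (cases "s = 0")
  case True
  then show ?thesis using n R by (simp add: marginal_lik_def lik_scale_def power_0_left)
next
  case False
  define v where "v = \<bar>s\<bar> * real n"
  define z where "z = design_tmult n X y"
  have v: "v > 0" unfolding v_def using False n by simp
  have "marginal_lik n X y g s
      \<le> lik_scale n v (\<Sum>i<n. (y i)\<^sup>2) * (\<Prod>k\<in>UNIV. exp ((z $ k)\<^sup>2 / (2 * v * real n)))"
    unfolding marginal_lik_def v_def[symmetric] z_def[symmetric]
    by (intro mult_left_mono prod_mono conjI tilted_normal_mass_le tilted_normal_mass_nonneg)
      (use v n in \<open>auto simp: lik_scale_def\<close>)
  also have "\<dots> = lik_scale n v (resid_ss n X y)"
    unfolding lik_scale_def resid_ss_def z_def[symmetric]
    by (simp add: exp_sum[symmetric] inner_vec_def power2_eq_square mult.assoc mult_exp_exp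
        sum_divide_distrib[symmetric] diff_divide_distrib field_simps)
  also have "\<dots> \<le> 1 + fact n / (pi * resid_ss n X y) ^ n"
    by (rule lik_scale_le[OF R v])
  finally show ?thesis .
qed

lemma borel_measurable_vec_nth[measurable (raw)]:
  fixes f :: "'a \<Rightarrow> real^'n"
  shows "f \<in> borel_measurable M \<Longrightarrow> (\<lambda>x. f x $ k) \<in> borel_measurable M"
  by (rule measurable_compose[OF _ borel_measurable_nth])

lemma marginal_lik_measurable:
  "(\<lambda>(g, s). marginal_lik n X y g s) \<in> borel_measurable (borel \<Otimes>\<^sub>M borel)"
  unfolding marginal_lik_def lik_scale_def tilted_normal_mass_def shrunk_mean_def shrunk_var_def
  by measurable

definition shrink_factor :: "'K::finite \<Rightarrow> real^'K \<Rightarrow> real \<Rightarrow> real" where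
  "shrink_factor k g s = \<bar>g $ k\<bar> / (\<bar>g $ k\<bar> + \<bar>s\<bar>)"

lemma shrink_factor_measurable:
  "(\<lambda>(g, s). shrink_factor k g s) \<in> borel_measurable (borel \<Otimes>\<^sub>M borel)"
  unfolding shrink_factor_def by measurable

lemma shrunk_mean_eq_shrink_factor:
  assumes "n > 0"
  shows "shrunk_mean (real n) (\<bar>s\<bar> * real n) \<bar>g $ k\<bar> z = z / real n * shrink_factor k g s"
  using assms by (cases "\<bar>g $ k\<bar> + \<bar>s\<bar> = 0") (simp_all add: shrunk_mean_def shrink_factor_def field_simps)

lemma shrink_factor_le_1: "shrink_factor k g s \<le> 1"
  unfolding shrink_factor_def by (simp add: divide_le_eq_1) arith

lemma shrink_factor_nonneg: "0 \<le> shrink_factor k g s"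
  unfolding shrink_factor_def by simp

lemma shrink_factor_ge:
  assumes "\<eta> > 0" "g $ k \<ge> \<eta>" "0 < s" "s \<le> s0"
  shows "\<eta> / (\<eta> + s0) \<le> shrink_factor k g s"
proof -
  have "\<eta> * s \<le> g $ k * s0" using assms by (intro mult_mono) auto
  then show ?thesis unfolding shrink_factor_def using assms by (simp add: field_simps)
qed

lemma integrable_iterated_bounded:
  fixes pr :: "'g::second_countable_topology measure" and mu :: "'s::second_countable_topology measure"
    and W :: "'g \<Rightarrow> 's \<Rightarrow> real"
  assumes pr: "prob_space pr" "sets pr = sets borel" and mu: "prob_space mu" "sets mu = sets borel"
    and W: "(\<lambda>(g, s). W g s) \<in> borel_measurable (borel \<Otimes>\<^sub>M borel)"
    and W_nonneg: "\<And>g s. 0 \<le> W g s" and W_le: "\<And>g s. W g s \<le> B"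
  shows "integrable mu (W g)" and "integrable pr (\<lambda>g. \<integral>s. W g s \<partial>mu)"
proof -
  interpret pr: prob_space pr by fact
  interpret mu: prob_space mu by fact
  have "sets (pr \<Otimes>\<^sub>M mu) = sets (borel \<Otimes>\<^sub>M borel :: ('g \<times> 's) measure)"
    using sets_pair_measure_cong[OF pr(2) mu(2)] by metis
  then have W': "(\<lambda>(g, s). W g s) \<in> borel_measurable (pr \<Otimes>\<^sub>M mu)"
    using W measurable_cong_sets by blast
  have "space pr = UNIV" using sets_eq_imp_space_eq[OF pr(2)] by simp
  then have "W g \<in> borel_measurable mu" for g
    using measurable_Pair2[OF W', of g] by simp
  then show int: "integrable mu (W g)" for g
    by (intro mu.integrable_const_bound[where B=B]) (use W_nonneg W_le in auto)
  show "integrable pr (\<lambda>g. \<integral>s. W g s \<partial>mu)"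
    using W_nonneg W_le mu.borel_measurable_lebesgue_integral[OF W']
    by (intro pr.integrable_const_bound[where B=B])
      (auto intro!: mu.integral_le_const int simp: integral_nonneg)
qed

lemma iterated_integral_pos:
  fixes pr :: "'g::second_countable_topology measure" and mu :: "'s::second_countable_topology measure"
    and W :: "'g \<Rightarrow> 's \<Rightarrow> real"
  assumes pr: "prob_space pr" "sets pr = sets borel" and mu: "prob_space mu" "sets mu = sets borel"
    and W: "(\<lambda>(g, s). W g s) \<in> borel_measurable (borel \<Otimes>\<^sub>M borel)"
    and W_nonneg: "\<And>g s. 0 \<le> W g s" and W_le: "\<And>g s. W g s \<le> B"
    and AE_pos: "AE g in pr. AE s in mu. 0 < W g s"
  shows "0 < (\<integral>g. (\<integral>s. W g s \<partial>mu) \<partial>pr)"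
proof -
  interpret pr: prob_space pr by fact
  interpret mu: prob_space mu by fact
  note int_W = integrable_iterated_bounded[OF pr mu W W_nonneg W_le]
  have "(\<integral>g. (\<integral>s. W g s \<partial>mu) \<partial>pr) \<noteq> 0"
  proof
    assume "(\<integral>g. (\<integral>s. W g s \<partial>mu) \<partial>pr) = 0"
    then have "AE g in pr. (\<integral>s. W g s \<partial>mu) = 0"
      using integral_nonneg_eq_0_iff_AE[OF int_W(2)] W_nonneg by (auto intro!: integral_nonneg)
    then have "AE g in pr. False"
      using AE_pos
    proof eventually_elim
      case (elim g)
      then have "AE s in mu. W g s = 0"
        using integral_nonneg_eq_0_iff_AE[OF int_W(1)] W_nonneg by auto
      with elim(2) have "AE s in mu. False" by eventually_elim auto
      then show False by (simp add: mu.AE_False)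
    qed
    then show False by (simp add: pr.AE_False)
  qed
  moreover have "0 \<le> (\<integral>g. (\<integral>s. W g s \<partial>mu) \<partial>pr)"
    using W_nonneg by (auto intro!: integral_nonneg)
  ultimately show ?thesis by simp
qed

lemma iterated_integral_weighted_bounds:
  fixes pr :: "'g::second_countable_topology measure" and mu :: "'s::second_countable_topology measure"
    and W h :: "'g \<Rightarrow> 's \<Rightarrow> real"
  assumes pr: "prob_space pr" "sets pr = sets borel" and mu: "prob_space mu" "sets mu = sets borel"
    and W: "(\<lambda>(g, s). W g s) \<in> borel_measurable (borel \<Otimes>\<^sub>M borel)"
    and h: "(\<lambda>(g, s). h g s) \<in> borel_measurable (borel \<Otimes>\<^sub>M borel)"
    and W_nonneg: "\<And>g s. 0 \<le> W g s" and W_le: "\<And>g s. W g s \<le> B"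
    and h_nonneg: "\<And>g s. 0 \<le> h g s" and h_le: "\<And>g s. h g s \<le> 1"
    and AE_h: "AE g in pr. AE s in mu. \<rho> \<le> h g s"
  shows "\<rho> * (\<integral>g. (\<integral>s. W g s \<partial>mu) \<partial>pr) \<le> (\<integral>g. (\<integral>s. h g s * W g s \<partial>mu) \<partial>pr)"
    and "(\<integral>g. (\<integral>s. h g s * W g s \<partial>mu) \<partial>pr) \<le> (\<integral>g. (\<integral>s. W g s \<partial>mu) \<partial>pr)"
proof -
  have hW_le: "h g s * W g s \<le> W g s" for g s
    using mult_right_mono[OF h_le[of g s] W_nonneg[of g s]] by simp
  have hW: "(\<lambda>(g, s). h g s * W g s) \<in> borel_measurable (borel \<Otimes>\<^sub>M borel)"
    using borel_measurable_times[OF h W] by (simp add: split_beta')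
  note int_W = integrable_iterated_bounded[OF pr mu W W_nonneg W_le]
  note int_hW = integrable_iterated_bounded[OF pr mu hW _ order_trans[OF hW_le W_le]]
    mult_nonneg_nonneg[OF h_nonneg W_nonneg]
  show "(\<integral>g. (\<integral>s. h g s * W g s \<partial>mu) \<partial>pr) \<le> (\<integral>g. (\<integral>s. W g s \<partial>mu) \<partial>pr)"
    by (intro integral_mono int_W int_hW hW_le)
  have "\<rho> * (\<integral>g. (\<integral>s. W g s \<partial>mu) \<partial>pr) = (\<integral>g. (\<integral>s. \<rho> * W g s \<partial>mu) \<partial>pr)"
    by simp
  also have "\<dots> \<le> (\<integral>g. (\<integral>s. h g s * W g s \<partial>mu) \<partial>pr)"
  proof (intro integral_mono_AE)
    show "AE g in pr. (\<integral>s. \<rho> * W g s \<partial>mu) \<le> (\<integral>s. h g s * W g s \<partial>mu)"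
      using AE_h
    proof eventually_elim
      case (elim g)
      then show ?case
        by (intro integral_mono_AE int_hW) (use int_W in \<open>auto elim!: AE_mp intro: mult_right_mono W_nonneg\<close>)
    qed
  qed (use int_W int_hW in auto)
  finally show "\<rho> * (\<integral>g. (\<integral>s. W g s \<partial>mu) \<partial>pr) \<le> (\<integral>g. (\<integral>s. h g s * W g s \<partial>mu) \<partial>pr)" .
qed

text \<open>\<open>H\<close> is a posterior average of the ridge shrinkage factors \<open>shrink_factor k g s\<close>.\<close>
lemma ss_post_mean_shrinkage:
  fixes X :: "nat \<Rightarrow> real^'K" and pr :: "(real^'K) measure" and mu :: "real measure"
  assumes n: "n > 0" and gram: "design_gram n X = mat (real n)"
    and pr: "prob_space pr" "sets pr = sets borel" and mu: "prob_space mu" "sets mu = sets borel"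
    and AE_gamma: "AE g in pr. \<forall>k. \<eta> \<le> g $ k" and AE_sigma: "AE s in mu. 0 < s \<and> s \<le> s0"
    and \<eta>: "\<eta> > 0" and rss: "resid_ss n X y > 0"
  obtains H where "\<eta> / (\<eta> + s0) \<le> H" "H \<le> 1"
    "ss_post_mean n X (real n) pr mu y $ k = design_tmult n X y $ k / real n * H"
proof -
  define W where "W = marginal_lik n X y"
  define D where "D = (\<integral>g. (\<integral>s. W g s \<partial>mu) \<partial>pr)"
  define N where "N = (\<integral>g. (\<integral>s. shrink_factor k g s * W g s \<partial>mu) \<partial>pr)"
  have AE_pos: "AE g in pr. AE s in mu. 0 < W g s \<and> \<eta> / (\<eta> + s0) \<le> shrink_factor k g s"
    using AE_gamma
  proof eventually_elim
    case (elim g)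
    then have "g $ j \<noteq> 0" for j
      using \<eta> by (metis less_le_trans not_le)
    from AE_sigma show ?case
      by eventually_elim (use elim \<open>\<And>j. g $ j \<noteq> 0\<close> \<eta> in
          \<open>auto simp: W_def intro!: marginal_lik_pos[OF n] shrink_factor_ge\<close>)
  qed
  have AE_W: "AE g in pr. AE s in mu. 0 < W g s"
    using AE_pos by eventually_elim (auto elim: eventually_mono)
  have AE_h: "AE g in pr. AE s in mu. \<eta> / (\<eta> + s0) \<le> shrink_factor k g s"
    using AE_pos by eventually_elim (auto elim: eventually_mono)
  have "0 < D"
    unfolding D_def W_def
    by (rule iterated_integral_pos[OF pr mu marginal_lik_measurable marginal_lik_nonneg
        marginal_lik_le[OF n rss] AE_W[unfolded W_def]])
  moreover have "\<eta> / (\<eta> + s0) * D \<le> N" "N \<le> D"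
    unfolding D_def N_def W_def
    by (fact iterated_integral_weighted_bounds[OF pr mu marginal_lik_measurable
        shrink_factor_measurable marginal_lik_nonneg marginal_lik_le[OF n rss]
        shrink_factor_nonneg shrink_factor_le_1 AE_h])+
  moreover have "ss_post_mean n X (real n) pr mu y $ k = design_tmult n X y $ k / real n * (N / D)"
    unfolding ss_post_mean_def vec_lambda_beta integral_lik_slab[OF n gram] integral_coord_lik_slab[OF n gram]
      shrunk_mean_eq_shrink_factor[OF n] N_def D_def W_def
    by (simp add: mult.assoc)
  ultimately show ?thesis
    by (intro that[of "N / D"]) (simp_all add: field_simps)
qed

lemma abs_ss_post_mean_rescaled_bounds:
  fixes X :: "nat \<Rightarrow> real^'K" and pr :: "(real^'K) measure" and mu :: "real measure"
    and \<beta> :: "real^'K" and e :: "nat \<Rightarrow> real"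
  defines "Y \<equiv> \<lambda>i. X i \<bullet> \<beta> + e i"
  assumes nK: "n > CARD('K)" and gram: "design_gram n X = mat (real n)"
    and pr: "prob_space pr" "sets pr = sets borel" and mu: "prob_space mu" "sets mu = sets borel"
    and AE_gamma: "AE g in pr. \<forall>k. \<eta> \<le> g $ k" and AE_sigma: "AE s in mu. 0 < s \<and> s \<le> s0"
    and \<eta>: "\<eta> > 0" and s0: "s0 > 0" and sigma_hat: "sigma_hat_sq n X Y > 0"
  shows "\<eta> / (\<eta> + s0) * (sqrt (real n) / sqrt (sigma_hat_sq n X Y) * \<bar>\<beta> $ k + design_tmult n X e $ k / real n\<bar>)
      \<le> \<bar>ss_post_mean n X (real n) pr mu (rescaled_resp n X Y) $ k\<bar>"
    and "\<bar>ss_post_mean n X (real n) pr mu (rescaled_resp n X Y) $ k\<bar>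
      \<le> sqrt (real n) / sqrt (sigma_hat_sq n X Y) * \<bar>\<beta> $ k + design_tmult n X e $ k / real n\<bar>"
proof -
  have n: "n > 0" using nK by simp
  define c where "c = sqrt (real n) / sqrt (sigma_hat_sq n X Y)"
  have c: "c > 0" unfolding c_def using n sigma_hat by simp
  have rescaled: "rescaled_resp n X Y = (\<lambda>i. c * Y i)"
    unfolding rescaled_resp_def c_def by simp
  have "resid_ss n X Y = sigma_hat_sq n X Y * (real n - real CARD('K))"
    using sigma_hat_sq_orthonormal[OF n gram, of Y] nK by simp
  moreover have "resid_ss n X (\<lambda>i. c * Y i) = real n / sigma_hat_sq n X Y * resid_ss n X Y"
    using sigma_hat unfolding resid_ss_scale by (simp add: c_def power_divide)
  ultimately have "resid_ss n X (\<lambda>i. c * Y i) = real n * (real n - real CARD('K))"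
    using sigma_hat by simp
  then have "resid_ss n X (rescaled_resp n X Y) > 0"
    unfolding rescaled using nK by simp
  then obtain H where H: "\<eta> / (\<eta> + s0) \<le> H" "H \<le> 1"
    "ss_post_mean n X (real n) pr mu (rescaled_resp n X Y) $ k
       = design_tmult n X (rescaled_resp n X Y) $ k / real n * H"
    using ss_post_mean_shrinkage[OF n gram pr mu AE_gamma AE_sigma \<eta>] by blast
  have "design_tmult n X (rescaled_resp n X Y) $ k / real n = c * (\<beta> $ k + design_tmult n X e $ k / real n)"
    using n unfolding rescaled unfolding Y_def
    by (simp add: design_tmult_scale design_tmult_add design_tmult_design[OF gram] field_simps)
  moreover have "0 < H"
    using H(1) \<eta> s0 divide_pos_pos[of \<eta> "\<eta> + s0"] by linarith
  ultimately have pm: "\<bar>ss_post_mean n X (real n) pr mu (rescaled_resp n X Y) $ k\<bar>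
      = H * (c * \<bar>\<beta> $ k + design_tmult n X e $ k / real n\<bar>)"
    using H(3) c by (simp add: abs_mult)
  have nonneg: "0 \<le> c * \<bar>\<beta> $ k + design_tmult n X e $ k / real n\<bar>" using c by simp
  show "\<eta> / (\<eta> + s0) * (sqrt (real n) / sqrt (sigma_hat_sq n X Y) * \<bar>\<beta> $ k + design_tmult n X e $ k / real n\<bar>)
      \<le> \<bar>ss_post_mean n X (real n) pr mu (rescaled_resp n X Y) $ k\<bar>"
    unfolding pm c_def[symmetric] by (rule mult_right_mono[OF H(1) nonneg])
  show "\<bar>ss_post_mean n X (real n) pr mu (rescaled_resp n X Y) $ k\<bar>
      \<le> sqrt (real n) / sqrt (sigma_hat_sq n X Y) * \<bar>\<beta> $ k + design_tmult n X e $ k / real n\<bar>"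
    unfolding pm c_def[symmetric] using \<open>0 < H\<close> H(2) by (intro mult_left_le_one_le nonneg) auto
qed

section \<open>Second-moment bounds for the noise\<close>

lemma integrable_mult_of_square_integrable:
  fixes Z W :: "'a \<Rightarrow> real"
  assumes [measurable]: "Z \<in> borel_measurable M" "W \<in> borel_measurable M"
    and "integrable M (\<lambda>\<omega>. (Z \<omega>)\<^sup>2)" "integrable M (\<lambda>\<omega>. (W \<omega>)\<^sup>2)"
  shows "integrable M (\<lambda>\<omega>. Z \<omega> * W \<omega>)"
proof (rule Bochner_Integration.integrable_bound[of _ "\<lambda>\<omega>. (Z \<omega>)\<^sup>2 + (W \<omega>)\<^sup>2"])
  show "integrable M (\<lambda>\<omega>. (Z \<omega>)\<^sup>2 + (W \<omega>)\<^sup>2)" using assms by simp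
  show "AE \<omega> in M. norm (Z \<omega> * W \<omega>) \<le> norm ((Z \<omega>)\<^sup>2 + (W \<omega>)\<^sup>2)"
  proof (intro AE_I2)
    fix \<omega>
    have "2 * \<bar>Z \<omega>\<bar> * \<bar>W \<omega>\<bar> \<le> (Z \<omega>)\<^sup>2 + (W \<omega>)\<^sup>2"
      using sum_squares_bound[of "\<bar>Z \<omega>\<bar>" "\<bar>W \<omega>\<bar>"] by simp
    moreover have "0 \<le> \<bar>Z \<omega>\<bar> * \<bar>W \<omega>\<bar>" by simp
    ultimately show "norm (Z \<omega> * W \<omega>) \<le> norm ((Z \<omega>)\<^sup>2 + (W \<omega>)\<^sup>2)"
      unfolding real_norm_def abs_mult using abs_ge_self[of "(Z \<omega>)\<^sup>2 + (W \<omega>)\<^sup>2"] by linarith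
  qed
qed measurable

lemma integral_sq_sum_orthogonal:
  fixes Z :: "'i \<Rightarrow> 'a \<Rightarrow> real"
  assumes I: "finite I"
    and meas: "\<And>i. Z i \<in> borel_measurable M"
    and sq: "\<And>i. integrable M (\<lambda>\<omega>. (Z i \<omega>)\<^sup>2)"
    and orth: "\<And>i j. i \<noteq> j \<Longrightarrow> (\<integral>\<omega>. Z i \<omega> * Z j \<omega> \<partial>M) = 0"
  shows "integrable M (\<lambda>\<omega>. (\<Sum>i\<in>I. Z i \<omega>)\<^sup>2)"
    and "(\<integral>\<omega>. (\<Sum>i\<in>I. Z i \<omega>)\<^sup>2 \<partial>M) = (\<Sum>i\<in>I. \<integral>\<omega>. (Z i \<omega>)\<^sup>2 \<partial>M)"
proof -
  have int: "integrable M (\<lambda>\<omega>. Z i \<omega> * Z j \<omega>)" for i j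
    by (rule integrable_mult_of_square_integrable[OF meas meas sq sq])
  have expand: "(\<lambda>\<omega>. (\<Sum>i\<in>I. Z i \<omega>)\<^sup>2) = (\<lambda>\<omega>. \<Sum>i\<in>I. \<Sum>j\<in>I. Z i \<omega> * Z j \<omega>)"
    by (simp add: power2_eq_square sum_product)
  show "integrable M (\<lambda>\<omega>. (\<Sum>i\<in>I. Z i \<omega>)\<^sup>2)"
    unfolding expand using int by simp
  have "(\<integral>\<omega>. (\<Sum>i\<in>I. Z i \<omega>)\<^sup>2 \<partial>M) = (\<Sum>i\<in>I. \<Sum>j\<in>I. \<integral>\<omega>. Z i \<omega> * Z j \<omega> \<partial>M)"
    unfolding expand using int by (simp add: Bochner_Integration.integral_sum)
  also have "\<dots> = (\<Sum>i\<in>I. \<Sum>j\<in>I. if i = j then \<integral>\<omega>. (Z i \<omega>)\<^sup>2 \<partial>M else 0)"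
    using orth by (intro sum.cong refl) (auto simp: power2_eq_square)
  finally show "(\<integral>\<omega>. (\<Sum>i\<in>I. Z i \<omega>)\<^sup>2 \<partial>M) = (\<Sum>i\<in>I. \<integral>\<omega>. (Z i \<omega>)\<^sup>2 \<partial>M)"
    using I by simp
qed

lemma (in prob_space) indep_vars_expectation_mult:
  fixes \<epsilon> :: "'i \<Rightarrow> 'a \<Rightarrow> real" and f :: "real \<Rightarrow> real"
  assumes indep: "indep_vars (\<lambda>_. borel) \<epsilon> UNIV"
    and f: "f \<in> borel_measurable borel"
    and int: "\<And>l. integrable M (\<lambda>\<omega>. f (\<epsilon> l \<omega>))"
    and "i \<noteq> j"
  shows "expectation (\<lambda>\<omega>. f (\<epsilon> i \<omega>) * f (\<epsilon> j \<omega>))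
       = expectation (\<lambda>\<omega>. f (\<epsilon> i \<omega>)) * expectation (\<lambda>\<omega>. f (\<epsilon> j \<omega>))"
proof -
  have "indep_vars (\<lambda>_. borel) (\<lambda>l \<omega>. f (\<epsilon> l \<omega>)) UNIV"
    by (rule indep_vars_compose2[OF indep]) (use f in auto)
  then have pair: "indep_vars (\<lambda>_. borel) (\<lambda>l \<omega>. f (\<epsilon> l \<omega>)) {i, j}"
    by (rule indep_vars_subset) auto
  have "expectation (\<lambda>\<omega>. \<Prod>l\<in>{i, j}. f (\<epsilon> l \<omega>)) = (\<Prod>l\<in>{i, j}. expectation (\<lambda>\<omega>. f (\<epsilon> l \<omega>)))"
    by (rule indep_vars_lebesgue_integral[OF _ pair]) (use int in auto)
  then show ?thesis using \<open>i \<noteq> j\<close> by simp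
qed

locale noise_model = prob_space M for M :: "'a measure" +
  fixes \<epsilon> :: "nat \<Rightarrow> 'a \<Rightarrow> real" and \<sigma>0sq Mb :: real
  assumes indep: "indep_vars (\<lambda>_. borel) \<epsilon> UNIV"
    and integrable_pow4: "\<And>i. integrable M (\<lambda>\<omega>. (\<epsilon> i \<omega>) ^ 4)"
    and mean0: "\<And>i. expectation (\<epsilon> i) = 0"
    and var: "\<And>i. expectation (\<lambda>\<omega>. (\<epsilon> i \<omega>)\<^sup>2) = \<sigma>0sq"
    and moment4: "\<And>i. expectation (\<lambda>\<omega>. (\<epsilon> i \<omega>) ^ 4) \<le> Mb"
begin

lemma noise_measurable[measurable]: "\<epsilon> i \<in> borel_measurable M"
  using indep unfolding indep_vars_def by auto

lemma integrable_sq: "integrable M (\<lambda>\<omega>. (\<epsilon> i \<omega>)\<^sup>2)"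
  by (rule square_integrable_imp_integrable) (use integrable_pow4[of i] in \<open>simp_all flip: power_mult\<close>)

lemma integrable_noise: "integrable M (\<epsilon> i)"
  by (rule square_integrable_imp_integrable[OF noise_measurable integrable_sq])

lemma expectation_sq_weighted_sum:
  shows "integrable M (\<lambda>\<omega>. (\<Sum>i<n. \<epsilon> i \<omega> * x i)\<^sup>2)"
    and "expectation (\<lambda>\<omega>. (\<Sum>i<n. \<epsilon> i \<omega> * x i)\<^sup>2) = \<sigma>0sq * (\<Sum>i<n. (x i)\<^sup>2)"
proof -
  let ?Z = "\<lambda>i \<omega>. \<epsilon> i \<omega> * x i"
  have orth: "expectation (\<lambda>\<omega>. ?Z i \<omega> * ?Z j \<omega>) = 0" if "i \<noteq> j" for i j
    using indep_vars_expectation_mult[OF indep, of "\<lambda>x. x"] integrable_noise mean0 that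
    by (simp add: mult_ac)
  have sq: "integrable M (\<lambda>\<omega>. (?Z i \<omega>)\<^sup>2)" for i
    using integrable_sq by (simp add: power_mult_distrib)
  note sum = integral_sq_sum_orthogonal[of "{..<n}" ?Z, OF _ _ sq orth]
  show "integrable M (\<lambda>\<omega>. (\<Sum>i<n. \<epsilon> i \<omega> * x i)\<^sup>2)"
    using sum(1) by simp
  show "expectation (\<lambda>\<omega>. (\<Sum>i<n. \<epsilon> i \<omega> * x i)\<^sup>2) = \<sigma>0sq * (\<Sum>i<n. (x i)\<^sup>2)"
    using sum(2) by (simp add: power_mult_distrib var sum_distrib_left mult_ac)
qed

lemma expectation_sq_centered_sum_sq:
  shows "integrable M (\<lambda>\<omega>. (\<Sum>i<n. (\<epsilon> i \<omega>)\<^sup>2 - \<sigma>0sq)\<^sup>2)"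
    and "expectation (\<lambda>\<omega>. (\<Sum>i<n. (\<epsilon> i \<omega>)\<^sup>2 - \<sigma>0sq)\<^sup>2) \<le> real n * Mb"
proof -
  let ?Z = "\<lambda>i \<omega>. (\<epsilon> i \<omega>)\<^sup>2 - \<sigma>0sq"
  have expand: "(\<lambda>\<omega>. (?Z i \<omega>)\<^sup>2) = (\<lambda>\<omega>. (\<epsilon> i \<omega>) ^ 4 - 2 * \<sigma>0sq * (\<epsilon> i \<omega>)\<^sup>2 + \<sigma>0sq\<^sup>2)" for i
    by (rule ext) (simp add: power2_diff flip: power_mult)
  have sq: "integrable M (\<lambda>\<omega>. (?Z i \<omega>)\<^sup>2)" for i
    unfolding expand using integrable_pow4 integrable_sq by simp
  have orth: "expectation (\<lambda>\<omega>. ?Z i \<omega> * ?Z j \<omega>) = 0" if "i \<noteq> j" for i j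
    using indep_vars_expectation_mult[OF indep, of "\<lambda>x. x\<^sup>2 - \<sigma>0sq"] integrable_sq that
    by (simp add: var prob_space)
  have le: "expectation (\<lambda>\<omega>. (?Z i \<omega>)\<^sup>2) \<le> Mb" for i
  proof -
    have "expectation (\<lambda>\<omega>. (?Z i \<omega>)\<^sup>2) = expectation (\<lambda>\<omega>. (\<epsilon> i \<omega>) ^ 4) - \<sigma>0sq\<^sup>2"
      unfolding expand using integrable_pow4[of i] integrable_sq[of i]
      by (simp add: var prob_space) (simp add: power2_eq_square)
    then show ?thesis
      using moment4[of i] zero_le_power2[of \<sigma>0sq] by linarith
  qed
  note sum = integral_sq_sum_orthogonal[of "{..<n}" ?Z, OF _ _ sq orth]
  show "integrable M (\<lambda>\<omega>. (\<Sum>i<n. (\<epsilon> i \<omega>)\<^sup>2 - \<sigma>0sq)\<^sup>2)"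
    using sum(1) by simp
  show "expectation (\<lambda>\<omega>. (\<Sum>i<n. (\<epsilon> i \<omega>)\<^sup>2 - \<sigma>0sq)\<^sup>2) \<le> real n * Mb"
    using sum(2) sum_mono[of "{..<n}", OF le] by simp
qed

lemma prob_weighted_sum_ge:
  assumes "a > 0"
  shows "measure M {\<omega>\<in>space M. a \<le> \<bar>\<Sum>i<n. \<epsilon> i \<omega> * x i\<bar>} \<le> \<sigma>0sq * (\<Sum>i<n. (x i)\<^sup>2) / a\<^sup>2"
  using second_moment_method[of "\<lambda>\<omega>. \<Sum>i<n. \<epsilon> i \<omega> * x i", OF _ _ assms]
    expectation_sq_weighted_sum by simp

lemma prob_design_tmult_nth_ge:
  fixes X :: "nat \<Rightarrow> real^'K"
  assumes gram: "design_gram n X = mat (real n)" and "T > 0" and "n > 0"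
  shows "measure M {\<omega>\<in>space M. T * sqrt (real n) \<le> \<bar>\<Sum>i<n. \<epsilon> i \<omega> * X i $ k\<bar>} \<le> \<sigma>0sq / T\<^sup>2"
proof -
  have "(\<Sum>i<n. (X i $ k)\<^sup>2) = real n"
    using design_gram_entry[OF gram, of k k] by (simp add: power2_eq_square)
  then show ?thesis
    using prob_weighted_sum_ge[where a = "T * sqrt (real n)" and n = n and x = "\<lambda>i. X i $ k"] assms(2,3)
    by (simp add: power_mult_distrib)
qed

lemma prob_sum_sq_deviation_ge:
  assumes "a > 0"
  shows "measure M {\<omega>\<in>space M. a \<le> \<bar>(\<Sum>i<n. (\<epsilon> i \<omega>)\<^sup>2) - real n * \<sigma>0sq\<bar>} \<le> real n * Mb / a\<^sup>2"
proof -
  have "measure M {\<omega>\<in>space M. a \<le> \<bar>\<Sum>i<n. (\<epsilon> i \<omega>)\<^sup>2 - \<sigma>0sq\<bar>}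
      \<le> expectation (\<lambda>\<omega>. (\<Sum>i<n. (\<epsilon> i \<omega>)\<^sup>2 - \<sigma>0sq)\<^sup>2) / a\<^sup>2"
    using second_moment_method[OF _ expectation_sq_centered_sum_sq(1) assms] by simp
  also have "\<dots> \<le> real n * Mb / a\<^sup>2"
    by (intro divide_right_mono expectation_sq_centered_sum_sq(2)) simp
  finally show ?thesis by (simp add: sum_subtractf)
qed

lemma prob_design_tmult_sq_ge:
  fixes X :: "nat \<Rightarrow> real^'K"
  assumes gram: "design_gram n X = mat (real n)" and "b > 0"
  shows "measure M {\<omega>\<in>space M. b \<le> (\<Sum>k\<in>UNIV. (\<Sum>i<n. \<epsilon> i \<omega> * X i $ k)\<^sup>2)}
    \<le> real CARD('K) * real n * \<sigma>0sq / b"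
proof -
  have "measure M {\<omega>\<in>space M. b \<le> (\<Sum>k\<in>UNIV. (\<Sum>i<n. \<epsilon> i \<omega> * X i $ k)\<^sup>2)}
      \<le> expectation (\<lambda>\<omega>. \<Sum>k\<in>UNIV. (\<Sum>i<n. \<epsilon> i \<omega> * X i $ k)\<^sup>2) / b"
    using expectation_sq_weighted_sum(1) \<open>b > 0\<close>
    by (intro integral_Markov_inequality_measure[OF _ sets.top]) (auto intro!: sum_nonneg)
  also have "expectation (\<lambda>\<omega>. \<Sum>k\<in>UNIV. (\<Sum>i<n. \<epsilon> i \<omega> * X i $ k)\<^sup>2) = (\<Sum>k\<in>(UNIV::'K set). \<sigma>0sq * real n)"
    using expectation_sq_weighted_sum design_gram_entry[OF gram]
    by (simp add: Bochner_Integration.integral_sum power2_eq_square)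
  finally show ?thesis by (simp add: mult_ac)
qed

end

section \<open>Exact selection on the good event\<close>

lemma sigma_hat_sq_bounds:
  fixes X :: "nat \<Rightarrow> real^'K"
  assumes nK: "n > 7 * CARD('K)" and gram: "design_gram n X = mat (real n)" and \<sigma>: "\<sigma>2 > 0"
    and sum_sq: "\<bar>(\<Sum>i<n. (e i)\<^sup>2) - real n * \<sigma>2\<bar> < (real n - real CARD('K)) * \<sigma>2 / 6"
    and proj: "design_tmult n X e \<bullet> design_tmult n X e < real n * (real n - real CARD('K)) * \<sigma>2 / 6"
  shows "\<sigma>2 / 2 \<le> sigma_hat_sq n X (\<lambda>i. X i \<bullet> \<beta> + e i)"
    and "sigma_hat_sq n X (\<lambda>i. X i \<bullet> \<beta> + e i) \<le> 3 * \<sigma>2 / 2"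
proof -
  define K where "K = real CARD('K)"
  define m where "m = real n - K"
  have n: "n > 0" using nK by simp
  have m: "m > 0" and K: "0 \<le> K * \<sigma>2" "K * \<sigma>2 \<le> m * \<sigma>2 / 6"
    unfolding m_def K_def using nK \<sigma> by (simp_all add: field_simps)
  define Q where "Q = (\<Sum>i<n. (e i)\<^sup>2)"
  define S where "S = design_tmult n X e \<bullet> design_tmult n X e / real n"
  have dev: "\<bar>Q - real n * \<sigma>2\<bar> < m * \<sigma>2 / 6"
    using sum_sq unfolding Q_def m_def K_def .
  have S: "0 \<le> S" "S < m * \<sigma>2 / 6"
    using proj n unfolding S_def m_def K_def by (simp_all add: field_simps)
  have "resid_ss n X e - m * \<sigma>2 = (Q - real n * \<sigma>2) - S + K * \<sigma>2"
    unfolding resid_ss_def Q_def S_def m_def by (simp add: algebra_simps)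
  then have "m * \<sigma>2 / 2 \<le> resid_ss n X e \<and> resid_ss n X e \<le> 3 * (m * \<sigma>2) / 2"
    using dev[unfolded abs_less_iff] S K by (intro conjI) linarith+
  moreover have "sigma_hat_sq n X (\<lambda>i. X i \<bullet> \<beta> + e i) = resid_ss n X e / m"
    unfolding sigma_hat_sq_orthonormal[OF n gram] resid_ss_signal_plus_noise[OF n gram] m_def K_def ..
  ultimately show "\<sigma>2 / 2 \<le> sigma_hat_sq n X (\<lambda>i. X i \<bullet> \<beta> + e i)"
    and "sigma_hat_sq n X (\<lambda>i. X i \<bullet> \<beta> + e i) \<le> 3 * \<sigma>2 / 2"
    using m by (auto simp: pos_le_divide_eq pos_divide_le_eq mult_ac)
qed

lemma sel_vector_nth_ne_0_iff:
  fixes X :: "nat \<Rightarrow> real^'K" and pr :: "(real^'K) measure" and mu :: "real measure"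
    and \<beta> :: "real^'K" and e :: "nat \<Rightarrow> real"
  defines "Y \<equiv> \<lambda>i. X i \<bullet> \<beta> + e i"
  assumes nK: "n > CARD('K)" and gram: "design_gram n X = mat (real n)"
    and pr: "prob_space pr" "sets pr = sets borel" and mu: "prob_space mu" "sets mu = sets borel"
    and AE_gamma: "AE g in pr. \<forall>k. \<eta> \<le> g $ k" and AE_sigma: "AE s in mu. 0 < s \<and> s \<le> s0"
    and \<eta>: "\<eta> > 0" and s0: "s0 > 0" and \<sigma>: "\<sigma>2 > 0" and T: "T \<ge> 0"
    and noise: "\<bar>design_tmult n X e $ k\<bar> \<le> T * sqrt (real n)"
    and sigma_hat: "\<sigma>2 / 2 \<le> sigma_hat_sq n X Y" "sigma_hat_sq n X Y \<le> 3 * \<sigma>2 / 2"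
    and signal: "\<beta> $ k \<noteq> 0 \<Longrightarrow> T / sqrt (real n) \<le> \<bar>\<beta> $ k\<bar> / 2 \<and>
      Cn \<le> \<eta> / (\<eta> + s0) / sqrt (3 * \<sigma>2 / 2) * sqrt (real n) * (\<bar>\<beta> $ k\<bar> / 2)"
    and threshold: "T / sqrt (\<sigma>2 / 2) < Cn"
  shows "sel_vector n X (real n) pr mu Y Cn $ k \<noteq> 0 \<longleftrightarrow> \<beta> $ k \<noteq> 0"
proof -
  define a where "a = sqrt (real n)"
  define pm where "pm = ss_post_mean n X (real n) pr mu (rescaled_resp n X Y) $ k"
  have a: "a > 0" unfolding a_def using nK by simp
  have sh: "sigma_hat_sq n X Y > 0" using sigma_hat \<sigma> by linarith
  note pm_bounds = abs_ss_post_mean_rescaled_bounds[where \<beta> = \<beta> and e = e and k = k,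
      OF nK gram pr mu AE_gamma AE_sigma \<eta> s0, folded Y_def, OF sh, folded a_def pm_def]
  have noise_mean: "\<bar>design_tmult n X e $ k / real n\<bar> \<le> T / a"
  proof -
    have "\<bar>design_tmult n X e $ k / real n\<bar> = \<bar>design_tmult n X e $ k\<bar> / (a * a)"
      unfolding a_def by simp
    also have "\<dots> \<le> T * a / (a * a)"
      using noise a unfolding a_def[symmetric] by (intro divide_right_mono) auto
    finally show ?thesis using a by simp
  qed
  have selected: "sel_vector n X (real n) pr mu Y Cn $ k \<noteq> 0 \<longleftrightarrow> Cn \<le> \<bar>pm\<bar>"
    unfolding sel_vector_def pm_def by simp
  show ?thesis
  proof (cases "\<beta> $ k = 0")
    case True
    have "\<bar>pm\<bar> \<le> a / sqrt (\<sigma>2 / 2) * (T / a)"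
      using pm_bounds(2) noise_mean a sh sigma_hat \<sigma> T unfolding True
      by (elim order_trans, intro mult_mono divide_left_mono real_sqrt_le_mono) auto
    also have "\<dots> = T / sqrt (\<sigma>2 / 2)" using a by simp
    finally show ?thesis using selected threshold True by simp
  next
    case False
    note signal = signal[OF False]
    have "\<bar>\<beta> $ k\<bar> / 2 \<le> \<bar>\<beta> $ k + design_tmult n X e $ k / real n\<bar>"
      using noise_mean signal unfolding a_def by linarith
    then have "\<eta> / (\<eta> + s0) * (a / sqrt (3 * \<sigma>2 / 2) * (\<bar>\<beta> $ k\<bar> / 2)) \<le> \<bar>pm\<bar>"
      using pm_bounds(1) \<eta> s0 a sh sigma_hat \<sigma>
      by (elim order_trans[rotated], intro mult_left_mono mult_mono divide_left_mono real_sqrt_le_mono) auto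
    moreover have "Cn \<le> \<eta> / (\<eta> + s0) * (a / sqrt (3 * \<sigma>2 / 2) * (\<bar>\<beta> $ k\<bar> / 2))"
      using signal unfolding a_def by (simp add: field_simps)
    ultimately show ?thesis using selected False by simp
  qed
qed

text \<open>The event on which the selection is exact: the OLS error \<open>X\<^sup>t e / n\<close> is below \<open>T / sqrt n\<close>
  in every coordinate, and by \<open>sigma_hat_sq_bounds\<close> the variance estimate lies in
  \<open>[\<sigma>\<^sup>2 / 2, 3 \<sigma>\<^sup>2 / 2]\<close>.\<close>
definition small_noise :: "nat \<Rightarrow> (nat \<Rightarrow> real^'K) \<Rightarrow> real \<Rightarrow> real \<Rightarrow> (nat \<Rightarrow> real) \<Rightarrow> bool" where
  "small_noise n X \<sigma>2 T e \<longleftrightarrow>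
     (\<forall>k. \<bar>design_tmult n X e $ k\<bar> < T * sqrt (real n)) \<and>
     \<bar>(\<Sum>i<n. (e i)\<^sup>2) - real n * \<sigma>2\<bar> < (real n - real CARD('K)) * \<sigma>2 / 6 \<and>
     design_tmult n X e \<bullet> design_tmult n X e < real n * (real n - real CARD('K)) * \<sigma>2 / 6"

lemma card_selected_eq:
  fixes X :: "nat \<Rightarrow> real^'K" and pr :: "(real^'K) measure" and mu :: "real measure"
    and \<beta> :: "real^'K" and e :: "nat \<Rightarrow> real"
  assumes nK: "n > 7 * CARD('K)" and gram: "design_gram n X = mat (real n)"
    and pr: "prob_space pr" "sets pr = sets borel" and mu: "prob_space mu" "sets mu = sets borel"
    and AE_gamma: "AE g in pr. \<forall>k. \<eta> \<le> g $ k" and AE_sigma: "AE s in mu. 0 < s \<and> s \<le> s0"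
    and \<eta>: "\<eta> > 0" and s0: "s0 > 0" and \<sigma>: "\<sigma>2 > 0" and T: "T \<ge> 0"
    and small: "small_noise n X \<sigma>2 T e"
    and signal: "\<And>k. \<beta> $ k \<noteq> 0 \<Longrightarrow> T / sqrt (real n) \<le> \<bar>\<beta> $ k\<bar> / 2 \<and>
      Cn \<le> \<eta> / (\<eta> + s0) / sqrt (3 * \<sigma>2 / 2) * sqrt (real n) * (\<bar>\<beta> $ k\<bar> / 2)"
    and threshold: "T / sqrt (\<sigma>2 / 2) < Cn"
  shows "card {k. sel_vector n X (real n) pr mu (\<lambda>i. X i \<bullet> \<beta> + e i) Cn $ k \<noteq> 0} = card {k. \<beta> $ k \<noteq> 0}"
proof -
  have "n > CARD('K)" using nK by simp
  moreover have "\<bar>design_tmult n X e $ k\<bar> \<le> T * sqrt (real n)" for k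
    using small unfolding small_noise_def by (simp add: less_imp_le)
  moreover note sigma_hat_sq_bounds[OF nK gram \<sigma>, of e \<beta>]
  ultimately have "sel_vector n X (real n) pr mu (\<lambda>i. X i \<bullet> \<beta> + e i) Cn $ k \<noteq> 0 \<longleftrightarrow> \<beta> $ k \<noteq> 0" for k
    using small signal[of k] unfolding small_noise_def
    by (intro sel_vector_nth_ne_0_iff[OF _ gram pr mu AE_gamma AE_sigma \<eta> s0 \<sigma> T _ _ _ _ threshold]) auto
  then show ?thesis by (intro arg_cong[where f=card]) auto
qed

section \<open>Probability of the good event\<close>

lemma chebyshev_error_terms_le:
  fixes K Mb \<sigma>2 :: real
  assumes K: "K \<ge> 0" and \<sigma>: "\<sigma>2 > 0" and Mb: "Mb \<ge> 0" and n: "real n \<ge> 2 * K + 1"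
  shows "real n * Mb / ((real n - K) * \<sigma>2 / 6)\<^sup>2 + K * real n * \<sigma>2 / (real n * (real n - K) * \<sigma>2 / 6)
     \<le> (144 * Mb / \<sigma>2\<^sup>2 + 12 * K) / real n"
proof -
  define m where "m = real n - K"
  have np: "real n > 0" using n K by linarith
  have m: "m \<ge> real n / 2" unfolding m_def using n by simp
  have "real n * Mb / (m * \<sigma>2 / 6)\<^sup>2 = 36 * Mb * real n / (\<sigma>2\<^sup>2 * m\<^sup>2)"
    by (simp add: power_divide power_mult_distrib field_simps)
  also have "\<dots> \<le> 36 * Mb * real n / (\<sigma>2\<^sup>2 * (real n / 2)\<^sup>2)"
    using m np \<sigma> Mb by (intro divide_left_mono mult_left_mono power_mono mult_pos_pos) auto
  also have "\<dots> = 144 * Mb / \<sigma>2\<^sup>2 / real n" using np by (simp add: power2_eq_square field_simps)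
  finally have first: "real n * Mb / (m * \<sigma>2 / 6)\<^sup>2 \<le> 144 * Mb / \<sigma>2\<^sup>2 / real n" .
  have "K * real n * \<sigma>2 / (real n * m * \<sigma>2 / 6) = 6 * K / m"
    using np \<sigma> by (simp add: field_simps)
  also have "\<dots> \<le> 6 * K / (real n / 2)" using m np K by (intro divide_left_mono) auto
  finally have second: "K * real n * \<sigma>2 / (real n * m * \<sigma>2 / 6) \<le> 12 * K / real n" by simp
  show ?thesis using first second unfolding m_def by (simp add: add_divide_distrib)
qed

context noise_model
begin

lemma moment4_bound_nonneg: "Mb \<ge> 0"
proof -
  have "0 \<le> expectation (\<lambda>\<omega>. (\<epsilon> 0 \<omega>) ^ 4)"
    by (rule Bochner_Integration.integral_nonneg) (simp add: zero_le_even_power)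
  then show ?thesis using moment4[of 0] by linarith
qed

lemma pred_small_noise[measurable]:
  "Measurable.pred M (\<lambda>\<omega>. small_noise n X \<sigma>2 T (\<lambda>i. \<epsilon> i \<omega>))"
  unfolding small_noise_def design_tmult_nth inner_vec_def by measurable

lemma prob_not_small_noise_le:
  fixes X :: "nat \<Rightarrow> real^'K"
  assumes nK: "n > 7 * CARD('K)" and gram: "design_gram n X = mat (real n)"
    and \<sigma>: "\<sigma>0sq > 0" and T: "T > 0"
  shows "measure M {\<omega>\<in>space M. \<not> small_noise n X \<sigma>0sq T (\<lambda>i. \<epsilon> i \<omega>)}
    \<le> real CARD('K) * (\<sigma>0sq / T\<^sup>2) + (144 * Mb / \<sigma>0sq\<^sup>2 + 12 * real CARD('K)) / real n"
proof -
  define K where "K = real CARD('K)"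
  define B1 where "B1 k = {\<omega>\<in>space M. T * sqrt (real n) \<le> \<bar>\<Sum>i<n. \<epsilon> i \<omega> * X i $ k\<bar>}" for k
  define B2 where "B2 = {\<omega>\<in>space M. (real n - K) * \<sigma>0sq / 6 \<le> \<bar>(\<Sum>i<n. (\<epsilon> i \<omega>)\<^sup>2) - real n * \<sigma>0sq\<bar>}"
  define B3 where "B3 = {\<omega>\<in>space M. real n * (real n - K) * \<sigma>0sq / 6 \<le> (\<Sum>k\<in>UNIV. (\<Sum>i<n. \<epsilon> i \<omega> * X i $ k)\<^sup>2)}"
  have n: "n > 0" and nK': "real n - K > 0" unfolding K_def using nK by simp_all
  have sets: "B1 k \<in> sets M" "B2 \<in> sets M" "B3 \<in> sets M" for k
    unfolding B1_def B2_def B3_def by measurable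
  have "{\<omega>\<in>space M. \<not> small_noise n X \<sigma>0sq T (\<lambda>i. \<epsilon> i \<omega>)} = (\<Union>k. B1 k) \<union> B2 \<union> B3"
    unfolding small_noise_def B1_def B2_def B3_def K_def
    by (auto simp: design_tmult_nth inner_vec_def power2_eq_square not_less)
  then have "measure M {\<omega>\<in>space M. \<not> small_noise n X \<sigma>0sq T (\<lambda>i. \<epsilon> i \<omega>)}
      \<le> (\<Sum>k\<in>UNIV. measure M (B1 k)) + measure M B2 + measure M B3"
    using sets finite_measure_subadditive_finite[of UNIV B1]
      measure_Un_le[of "(\<Union>k. B1 k) \<union> B2" M B3] measure_Un_le[of "\<Union>k. B1 k" M B2]
    by fastforce
  also have "\<dots> \<le> K * (\<sigma>0sq / T\<^sup>2) + real n * Mb / ((real n - K) * \<sigma>0sq / 6)\<^sup>2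
      + K * real n * \<sigma>0sq / (real n * (real n - K) * \<sigma>0sq / 6)"
  proof (intro add_mono)
    have "measure M (B1 k) \<le> \<sigma>0sq / T\<^sup>2" for k
      unfolding B1_def by (rule prob_design_tmult_nth_ge[OF gram T n])
    then show "(\<Sum>k\<in>UNIV. measure M (B1 k)) \<le> K * (\<sigma>0sq / T\<^sup>2)"
      using sum_mono[of UNIV "\<lambda>k. measure M (B1 k)" "\<lambda>_. \<sigma>0sq / T\<^sup>2"] unfolding K_def by simp
    show "measure M B2 \<le> real n * Mb / ((real n - K) * \<sigma>0sq / 6)\<^sup>2"
      unfolding B2_def using nK' \<sigma> by (intro prob_sum_sq_deviation_ge) simp
    show "measure M B3 \<le> K * real n * \<sigma>0sq / (real n * (real n - K) * \<sigma>0sq / 6)"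
      unfolding B3_def K_def using nK' \<sigma> n by (intro prob_design_tmult_sq_ge gram) (simp add: K_def)
  qed
  also have "\<dots> \<le> K * (\<sigma>0sq / T\<^sup>2) + (144 * Mb / \<sigma>0sq\<^sup>2 + 12 * K) / real n"
    using chebyshev_error_terms_le[of K \<sigma>0sq Mb n] moment4_bound_nonneg \<sigma> nK unfolding K_def by simp
  finally show ?thesis unfolding K_def .
qed

end

section \<open>Consistency of the selected model size\<close>

lemma exists_inverse_sq_lt:
  fixes a r :: real
  assumes a: "0 \<le> a" and r: "0 < r"
  obtains T where "T > 0" "a / T\<^sup>2 < r"
proof -
  define T where "T = sqrt (a / r) + 1"
  have "0 \<le> sqrt (a / r)" using a r by simp
  then have T: "T > 0" "sqrt (a / r) < T" unfolding T_def by linarith+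
  then have "(sqrt (a / r))\<^sup>2 < T\<^sup>2"
    using a r by (intro power_strict_mono) auto
  then have "a < r * T\<^sup>2" using a r by (simp add: field_simps)
  moreover have "0 < T\<^sup>2" using T(1) by simp
  ultimately have "a / T\<^sup>2 < r"
    by (simp only: pos_divide_less_eq)
  with T(1) show ?thesis ..
qed

lemma eventually_selection_thresholds:
  fixes C :: "nat \<Rightarrow> real" and \<beta> :: "real^'K"
  assumes C_inf: "filterlim C at_top sequentially"
    and C_slow: "((\<lambda>n. C n / sqrt (real n)) \<longlongrightarrow> 0) sequentially" and c: "c > 0"
  shows "eventually (\<lambda>n. t < C n \<and> (\<forall>k. \<beta> $ k \<noteq> 0 \<longrightarrow>
    T / sqrt (real n) \<le> \<bar>\<beta> $ k\<bar> / 2 \<and> C n \<le> c * sqrt (real n) * (\<bar>\<beta> $ k\<bar> / 2))) sequentially"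
proof -
  have T_lim: "((\<lambda>n. T / sqrt (real n)) \<longlongrightarrow> 0) sequentially"
    by (intro tendsto_divide_0[OF tendsto_const] filterlim_at_top_imp_at_infinity
        filterlim_compose[OF sqrt_at_top filterlim_real_sequentially])
  have "eventually (\<lambda>n. t < C n) sequentially"
    using C_inf by (simp add: filterlim_at_top_dense)
  moreover have "eventually (\<lambda>n. \<forall>k. \<beta> $ k \<noteq> 0 \<longrightarrow>
    T / sqrt (real n) \<le> \<bar>\<beta> $ k\<bar> / 2 \<and> C n \<le> c * sqrt (real n) * (\<bar>\<beta> $ k\<bar> / 2)) sequentially"
  proof (rule eventually_all_finite)
    fix k
    show "eventually (\<lambda>n. \<beta> $ k \<noteq> 0 \<longrightarrow>
      T / sqrt (real n) \<le> \<bar>\<beta> $ k\<bar> / 2 \<and> C n \<le> c * sqrt (real n) * (\<bar>\<beta> $ k\<bar> / 2)) sequentially"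
    proof (cases "\<beta> $ k = 0")
      case False
      then have b: "\<bar>\<beta> $ k\<bar> / 2 > 0" by simp
      have "eventually (\<lambda>n. T / sqrt (real n) < \<bar>\<beta> $ k\<bar> / 2) sequentially"
        using order_tendstoD(2)[OF T_lim b] .
      moreover have "eventually (\<lambda>n. C n / sqrt (real n) < c * (\<bar>\<beta> $ k\<bar> / 2)) sequentially"
        using c b by (intro order_tendstoD(2)[OF C_slow] mult_pos_pos)
      moreover have "eventually (\<lambda>n. n \<ge> 1) sequentially"
        by (rule eventually_ge_at_top)
      ultimately show ?thesis
        by eventually_elim (auto simp: field_simps)
    qed simp
  qed
  ultimately show ?thesis
    by eventually_elim blast
qed

lemma (in noise_model) selection_error_prob_le:
  fixes X :: "nat \<Rightarrow> real^'K" and pr :: "(real^'K) measure" and mu :: "real measure"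
  assumes nK: "n > 7 * CARD('K)" and gram: "design_gram n X = mat (real n)"
    and pr: "prob_space pr" "sets pr = sets borel" and mu: "prob_space mu" "sets mu = sets borel"
    and AE_gamma: "AE g in pr. \<forall>k. \<eta> \<le> g $ k" and AE_sigma: "AE s in mu. 0 < s \<and> s \<le> s0"
    and \<eta>: "\<eta> > 0" and s0: "s0 > 0" and \<sigma>: "\<sigma>0sq > 0" and T: "T > 0"
    and signal: "\<And>k. \<beta> $ k \<noteq> 0 \<Longrightarrow> T / sqrt (real n) \<le> \<bar>\<beta> $ k\<bar> / 2 \<and>
      Cn \<le> \<eta> / (\<eta> + s0) / sqrt (3 * \<sigma>0sq / 2) * sqrt (real n) * (\<bar>\<beta> $ k\<bar> / 2)"
    and threshold: "T / sqrt (\<sigma>0sq / 2) < Cn" and \<delta>: "\<delta> > 0"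
  shows "measure M {\<omega>\<in>space M. \<delta> < \<bar>real (card {k. sel_vector n X (real n) pr mu
      (\<lambda>i. X i \<bullet> \<beta> + \<epsilon> i \<omega>) Cn $ k \<noteq> 0}) - real (card {k. \<beta> $ k \<noteq> 0})\<bar>}
    \<le> real CARD('K) * (\<sigma>0sq / T\<^sup>2) + (144 * Mb / \<sigma>0sq\<^sup>2 + 12 * real CARD('K)) / real n"
proof -
  have "{\<omega>\<in>space M. \<delta> < \<bar>real (card {k. sel_vector n X (real n) pr mu
      (\<lambda>i. X i \<bullet> \<beta> + \<epsilon> i \<omega>) Cn $ k \<noteq> 0}) - real (card {k. \<beta> $ k \<noteq> 0})\<bar>}
    \<subseteq> {\<omega>\<in>space M. \<not> small_noise n X \<sigma>0sq T (\<lambda>i. \<epsilon> i \<omega>)}"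
    using card_selected_eq[OF nK gram pr mu AE_gamma AE_sigma \<eta> s0 \<sigma> less_imp_le[OF T] _ signal threshold]
      \<delta> by force
  then show ?thesis
    using prob_not_small_noise_le[OF nK gram \<sigma> T]
    by (elim order_trans[rotated] finite_measure_mono) measurable
qed

lemma (in noise_model) selection_error_tendsto_0:
  fixes X :: "nat \<Rightarrow> nat \<Rightarrow> real^'K" and pr :: "(real^'K) measure" and mu :: "real measure"
    and C :: "nat \<Rightarrow> real"
  assumes gram: "\<And>n. n > CARD('K) \<Longrightarrow> design_gram n (X n) = mat (real n)"
    and pr: "prob_space pr" "sets pr = sets borel" and mu: "prob_space mu" "sets mu = sets borel"
    and AE_gamma: "AE g in pr. \<forall>k. \<eta> \<le> g $ k" and AE_sigma: "AE s in mu. 0 < s \<and> s \<le> s0"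
    and \<eta>: "\<eta> > 0" and s0: "s0 > 0" and \<sigma>: "\<sigma>0sq > 0"
    and C_inf: "filterlim C at_top sequentially"
    and C_slow: "((\<lambda>n. C n / sqrt (real n)) \<longlongrightarrow> 0) sequentially"
    and \<delta>: "\<delta> > 0"
  shows "((\<lambda>n. measure M {\<omega>\<in>space M. \<delta> < \<bar>real (card {k. sel_vector n (X n) (real n) pr mu
      (\<lambda>i. X n i \<bullet> \<beta> + \<epsilon> i \<omega>) (C n) $ k \<noteq> 0}) - real (card {k. \<beta> $ k \<noteq> 0})\<bar>}) \<longlongrightarrow> 0)
    sequentially"
proof (rule tendstoI)
  fix r :: real
  assume "r > 0"
  obtain T where T: "T > 0" "real CARD('K) * (\<sigma>0sq / T\<^sup>2) < r / 2"
    using exists_inverse_sq_lt[of "real CARD('K) * \<sigma>0sq" "r / 2"] \<sigma> \<open>r > 0\<close> by auto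
  have c: "\<eta> / (\<eta> + s0) / sqrt (3 * \<sigma>0sq / 2) > 0"
    using \<eta> s0 \<sigma> by simp
  have "eventually (\<lambda>n. (144 * Mb / \<sigma>0sq\<^sup>2 + 12 * real CARD('K)) / real n < r / 2) sequentially"
    using order_tendstoD(2)[OF lim_const_over_n] \<open>r > 0\<close> by simp
  moreover have "eventually (\<lambda>n. n > 7 * CARD('K)) sequentially"
    by (rule eventually_gt_at_top)
  moreover note eventually_selection_thresholds[OF C_inf C_slow c,
      where t = "T / sqrt (\<sigma>0sq / 2)" and T = T and \<beta> = \<beta>]
  ultimately show "eventually (\<lambda>n. dist (measure M {\<omega>\<in>space M. \<delta> < \<bar>real (card {k. sel_vector n (X n)
      (real n) pr mu (\<lambda>i. X n i \<bullet> \<beta> + \<epsilon> i \<omega>) (C n) $ k \<noteq> 0}) - real (card {k. \<beta> $ k \<noteq> 0})\<bar>}) 0 < r)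
    sequentially"
  proof eventually_elim
    case (elim n)
    have "measure M {\<omega>\<in>space M. \<delta> < \<bar>real (card {k. sel_vector n (X n) (real n) pr mu
        (\<lambda>i. X n i \<bullet> \<beta> + \<epsilon> i \<omega>) (C n) $ k \<noteq> 0}) - real (card {k. \<beta> $ k \<noteq> 0})\<bar>}
      \<le> real CARD('K) * (\<sigma>0sq / T\<^sup>2) + (144 * Mb / \<sigma>0sq\<^sup>2 + 12 * real CARD('K)) / real n"
      (is "?error \<le> _")
      using elim(2,3) gram[of n] \<delta>
      by (intro selection_error_prob_le[OF elim(2) _ pr mu AE_gamma AE_sigma \<eta> s0 \<sigma> T(1)]) auto
    then have "?error < r"
      using elim(1) T(2) by linarith
    then show ?case by simp
  qed
qed

theorem corollary1:
  fixes P :: "'a measure"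
    and X :: "nat \<Rightarrow> nat \<Rightarrow> real^'K"
    and \<beta>0 :: "real^'K"
    and \<epsilon> :: "nat \<Rightarrow> 'a \<Rightarrow> real"
    and \<sigma>0sq Mb \<eta>0 s0sq :: real
    and pr :: "(real^'K) measure"
    and mu :: "real measure"
    and C :: "nat \<Rightarrow> real"
  assumes gram: "\<And>n j k. n > CARD('K) \<Longrightarrow>
                   (\<Sum>i<n. X n i $ j * X n i $ k) = (if j = k then real n else 0)"
    and centered: "\<And>n k. n > CARD('K) \<Longrightarrow> (\<Sum>i<n. X n i $ k) = 0"
    and lev: "((\<lambda>n. Max ((\<lambda>i. norm (X n i)) ` {..<n}) / sqrt (real n)) \<longlongrightarrow> 0) sequentially"
    and P: "prob_space P"
    and indep: "prob_space.indep_vars P (\<lambda>_. borel) \<epsilon> UNIV"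
    and int4: "\<And>i. integrable P (\<lambda>\<omega>. (\<epsilon> i \<omega>) ^ 4)"
    and mean0: "\<And>i. prob_space.expectation P (\<epsilon> i) = 0"
    and var: "\<And>i. prob_space.expectation P (\<lambda>\<omega>. (\<epsilon> i \<omega>)\<^sup>2) = \<sigma>0sq"
    and var_pos: "\<sigma>0sq > 0"
    and mom4: "\<And>i. prob_space.expectation P (\<lambda>\<omega>. (\<epsilon> i \<omega>) ^ 4) \<le> Mb"
    and pr: "prob_space pr" "sets pr = sets borel"
    and pr_pos: "\<And>k. measure pr {g. g $ k > 0} = 1"
    and eta0: "\<eta>0 > 0" "\<And>k. measure pr {g. g $ k \<ge> \<eta>0} = 1"
    and mu: "prob_space mu" "sets mu = sets borel"
    and mu_pos: "measure mu {s. s > 0} = 1"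
    and s0: "0 < s0sq" "measure mu {s. s \<le> s0sq} = 1"
    and C_pos: "\<And>n. C n > 0"
    and C_mono: "incseq C"
    and C_inf: "filterlim C at_top sequentially"
    and C_slow: "((\<lambda>n. C n / sqrt (real n)) \<longlongrightarrow> 0) sequentially"
  shows "conv_in_prob P
           (\<lambda>n \<omega>. real (card {k. sel_vector n (X n) (real n) pr mu
                                  (\<lambda>i. X n i \<bullet> \<beta>0 + \<epsilon> i \<omega>) (C n) $ k \<noteq> 0}))
           (real (card {k. \<beta>0 $ k \<noteq> 0}))"
proof -
  interpret noise_model P \<epsilon> \<sigma>0sq Mb
    by (intro noise_model.intro P noise_model_axioms.intro indep int4 mean0 var mom4)
  have AE_gamma: "AE g in pr. \<forall>k. \<eta>0 \<le> g $ k"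
    unfolding AE_all_countable using prob_space.AE_prob_1[OF pr(1) eta0(2)] by simp
  have AE_sigma: "AE s in mu. 0 < s \<and> s \<le> s0sq"
    using prob_space.AE_prob_1[OF mu(1) mu_pos] prob_space.AE_prob_1[OF mu(1) s0(2)] by eventually_elim auto
  have "design_gram n (X n) = mat (real n)" if "n > CARD('K)" for n
    using gram[OF that] by (simp add: design_gram_eq_mat_iff)
  then show ?thesis
    unfolding conv_in_prob_def
    using selection_error_tendsto_0[OF _ pr mu AE_gamma AE_sigma eta0(1) s0(1) var_pos C_inf C_slow]
    by blast
qed

end
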